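(* Let $n\geq 4$ and let $L$ be an indecomposable solvable Lie algebra over $\mathbb{K}\in\{\mathbb{C},\mathbb{R}\}$ with nilradical $T(n)$ and $\dim L=1+\frac12n(n-1)$, with basis $\{X\}\cup\{N_{ik}:1\leq i<k\leq n\}$ and structure matrix $A=(A_{ik,ab})$ given by $[X,N_{ik}]=\sum_{a<b}A_{ik,ab}N_{ab}$, brought to canonical form. Then: (1) $A$ has at most $n-2$ nonzero off-diagonal entries. (2) These off-diagonal entries can all be normalized to $+1$ if $\mathbb{K}=\mathbb{C}$, and to $+1$ or $-1$ if $\mathbb{K}=\mathbb{R}$.
   Context: $T(n)$ is the Lie algebra of strictly upper triangular $n\times n$ matrices over $\mathbb{K}$, with basis the matrix units $N_{ik}$ and brackets $[N_{ik},N_{ab}]=\delta_{ka}N_{ib}-\delta_{bi}N_{ak}$. The nilradical is the maximal nilpotent ideal; $X$ is a nonnilpotent element spanning a complement. $A$ is indexed by pairs $(i,k)$, $i<k$, ordered first by $k-i$ then by $i$. The canonical form is the form obtained by admissible transformations: (i) $X\to X+\sum\mu_{pq}N_{pq}$; (ii) changes of basis $N\to GN$ of the nilradical preserving its commutation relations ($A\to GAG^{-1}$); (iii) rescaling $X$; in this form as many off-diagonal entries as possible are annulled, and normalization refers to rescaling nonzero entries by such basis changes. *)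

theory Defs
  imports Complex_Main
begin

text \<open>Index set of the basis N_ik of T(n): pairs (i,k) with 1 <= i < k <= n.\<close>
definition Pn :: "nat \<Rightarrow> (nat \<times> nat) set" where
  "Pn n = {(i,k). 1 \<le> i \<and> i < k \<and> k \<le> n}"

text \<open>T(n): strictly upper triangular n x n matrices, as functions on index pairs.\<close>
definition Tn :: "nat \<Rightarrow> (nat \<times> nat \<Rightarrow> 'a::field) set" where
  "Tn n = {v. \<forall>p. p \<notin> Pn n \<longrightarrow> v p = 0}"

text \<open>Matrix commutator; on basis elements [N_ik,N_ab] = d_ka N_ib - d_bi N_ak.\<close>
definition brk :: "nat \<Rightarrow> (nat \<times> nat \<Rightarrow> 'a::field) \<Rightarrow> (nat \<times> nat \<Rightarrow> 'a) \<Rightarrow> (nat \<times> nat \<Rightarrow> 'a)" where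
  "brk n v w = (\<lambda>(a,b). \<Sum>j\<in>{1..n}. v (a,j) * w (j,b) - w (a,j) * v (j,b))"

definition Eu :: "nat \<times> nat \<Rightarrow> (nat \<times> nat \<Rightarrow> 'a::field)" where
  "Eu p = (\<lambda>q. if q = p then 1 else 0)"

text \<open>Linear map of T(n) given by a matrix M indexed by pairs:
  N_p |-> sum_q M p q N_q.\<close>
definition linmap :: "nat \<Rightarrow> (nat \<times> nat \<Rightarrow> nat \<times> nat \<Rightarrow> 'a::field) \<Rightarrow> (nat \<times> nat \<Rightarrow> 'a) \<Rightarrow> (nat \<times> nat \<Rightarrow> 'a)" where
  "linmap n M v = (\<lambda>q. if q \<in> Pn n then (\<Sum>p\<in>Pn n. v p * M p q) else 0)"

text \<open>A is a structure matrix, i.e. [X,N_p] = sum_q A p q N_q defines a derivation of T(n)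
  (this is the Jacobi identity for L = span X + T(n)).\<close>
definition is_derivation :: "nat \<Rightarrow> (nat \<times> nat \<Rightarrow> nat \<times> nat \<Rightarrow> 'a::field) \<Rightarrow> bool" where
  "is_derivation n A \<longleftrightarrow>
     (\<forall>v\<in>Tn n. \<forall>w\<in>Tn n. linmap n A (brk n v w) = (\<lambda>q. brk n (linmap n A v) w q + brk n v (linmap n A w) q))"

text \<open>ad X restricted to the nilradical is not nilpotent.\<close>
definition nonnilpotent :: "nat \<Rightarrow> (nat \<times> nat \<Rightarrow> nat \<times> nat \<Rightarrow> 'a::field) \<Rightarrow> bool" where
  "nonnilpotent n A \<longleftrightarrow> \<not> (\<exists>m. \<forall>v\<in>Tn n. (linmap n A ^^ m) v = (\<lambda>_. 0))"

text \<open>The Lie algebra L = span{X} + T(n): elements (t,v) stand for t X + v.\<close>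
definition Lc :: "nat \<Rightarrow> ('a::field \<times> (nat \<times> nat \<Rightarrow> 'a)) set" where
  "Lc n = {(t,v). v \<in> Tn n}"

definition Lbr :: "nat \<Rightarrow> (nat \<times> nat \<Rightarrow> nat \<times> nat \<Rightarrow> 'a::field)
   \<Rightarrow> ('a \<times> (nat \<times> nat \<Rightarrow> 'a)) \<Rightarrow> ('a \<times> (nat \<times> nat \<Rightarrow> 'a)) \<Rightarrow> ('a \<times> (nat \<times> nat \<Rightarrow> 'a))" where
  "Lbr n A x y = (0, (\<lambda>q. fst x * linmap n A (snd y) q - fst y * linmap n A (snd x) q
                          + brk n (snd x) (snd y) q))"

definition L_ideal :: "nat \<Rightarrow> (nat \<times> nat \<Rightarrow> nat \<times> nat \<Rightarrow> 'a::field) \<Rightarrow> ('a \<times> (nat \<times> nat \<Rightarrow> 'a)) set \<Rightarrow> bool" where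
  "L_ideal n A I \<longleftrightarrow> I \<subseteq> Lc n \<and> (0, \<lambda>_. 0) \<in> I
     \<and> (\<forall>x\<in>I. \<forall>y\<in>I. (fst x + fst y, \<lambda>q. snd x q + snd y q) \<in> I)
     \<and> (\<forall>c. \<forall>x\<in>I. (c * fst x, \<lambda>q. c * snd x q) \<in> I)
     \<and> (\<forall>x\<in>Lc n. \<forall>y\<in>I. Lbr n A x y \<in> I)"

definition indecomposable :: "nat \<Rightarrow> (nat \<times> nat \<Rightarrow> nat \<times> nat \<Rightarrow> 'a::field) \<Rightarrow> bool" where
  "indecomposable n A \<longleftrightarrow> \<not> (\<exists>I J. L_ideal n A I \<and> L_ideal n A J
      \<and> I \<noteq> {(0, \<lambda>_. 0)} \<and> J \<noteq> {(0, \<lambda>_. 0)} \<and> I \<inter> J = {(0, \<lambda>_. 0)}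
      \<and> (\<forall>z\<in>Lc n. \<exists>x\<in>I. \<exists>y\<in>J. z = (fst x + fst y, \<lambda>q. snd x q + snd y q)))"

text \<open>Single admissible transformations of the structure matrix (only entries on Pn x Pn matter).
  (i) X -> X + M, M in T(n);  (ii) N -> G N, G an automorphism of T(n), A -> G A G^-1;
  (iii) X -> c X, c nonzero.\<close>
definition adm_step :: "nat \<Rightarrow> (nat \<times> nat \<Rightarrow> nat \<times> nat \<Rightarrow> 'a::field) \<Rightarrow> (nat \<times> nat \<Rightarrow> nat \<times> nat \<Rightarrow> 'a) \<Rightarrow> bool" where
  "adm_step n A A' \<longleftrightarrow>
     (\<exists>\<mu>\<in>Tn n. \<forall>p\<in>Pn n. \<forall>q\<in>Pn n. A' p q = A p q + brk n \<mu> (Eu p) q)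
   \<or> (\<exists>G. bij_betw (linmap n G) (Tn n) (Tn n)
          \<and> (\<forall>v\<in>Tn n. \<forall>w\<in>Tn n. linmap n G (brk n v w) = (\<lambda>q. if q \<in> Pn n then brk n (linmap n G v) (linmap n G w) q else 0))
          \<and> (\<forall>p\<in>Pn n. \<forall>s\<in>Pn n. (\<Sum>r\<in>Pn n. G p r * A r s) = (\<Sum>r\<in>Pn n. A' p r * G r s)))
   \<or> (\<exists>c. c \<noteq> 0 \<and> (\<forall>p\<in>Pn n. \<forall>q\<in>Pn n. A' p q = c * A p q))"

definition admissible :: "nat \<Rightarrow> (nat \<times> nat \<Rightarrow> nat \<times> nat \<Rightarrow> 'a::field) \<Rightarrow> (nat \<times> nat \<Rightarrow> nat \<times> nat \<Rightarrow> 'a) \<Rightarrow> bool" where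
  "admissible n = (adm_step n)\<^sup>*\<^sup>*"

definition offdiag_support :: "nat \<Rightarrow> (nat \<times> nat \<Rightarrow> nat \<times> nat \<Rightarrow> 'a::field) \<Rightarrow> ((nat \<times> nat) \<times> (nat \<times> nat)) set" where
  "offdiag_support n A = {(p,q). p \<in> Pn n \<and> q \<in> Pn n \<and> p \<noteq> q \<and> A p q \<noteq> 0}"

definition offdiag_count :: "nat \<Rightarrow> (nat \<times> nat \<Rightarrow> nat \<times> nat \<Rightarrow> 'a::field) \<Rightarrow> nat" where
  "offdiag_count n A = card (offdiag_support n A)"

definition canonical_form :: "nat \<Rightarrow> (nat \<times> nat \<Rightarrow> nat \<times> nat \<Rightarrow> 'a::field) \<Rightarrow> (nat \<times> nat \<Rightarrow> nat \<times> nat \<Rightarrow> 'a) \<Rightarrow> bool" where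
  "canonical_form n A A' \<longleftrightarrow> admissible n A A'
     \<and> (\<forall>A''. admissible n A A'' \<longrightarrow> offdiag_count n A' \<le> offdiag_count n A'')"

definition valid_structure :: "nat \<Rightarrow> (nat \<times> nat \<Rightarrow> nat \<times> nat \<Rightarrow> 'a::field) \<Rightarrow> bool" where
  "valid_structure n A \<longleftrightarrow> is_derivation n A \<and> nonnilpotent n A \<and> indecomposable n A"

definition normalizable_to :: "nat \<Rightarrow> 'a::field set \<Rightarrow> (nat \<times> nat \<Rightarrow> nat \<times> nat \<Rightarrow> 'a) \<Rightarrow> bool" where
  "normalizable_to n S A' \<longleftrightarrow> (\<exists>A''. admissible n A' A''
      \<and> offdiag_support n A'' = offdiag_support n A'
      \<and> (\<forall>(p,q)\<in>offdiag_support n A''. A'' p q \<in> S))"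

end

theory Submission
  imports Defs
begin

text \<open>An inner derivation (transformation (i)) can be chosen to annihilate, in the structure
  matrix of a derivation of T(n), the entries of the rows N_{a-1,a} at the columns N_{a-1,b} and
  of the rows N_{b,b+1} at the column N_{1,b+1}. The derivation identities on matrix units then
  kill every off-diagonal entry except the n - 1 entries in the rows N_{j,j+1} at the columns
  N_{2n} (j = 1), N_{1n} (1 < j < n - 1) and N_{1,n-1} (j = n - 1). If the diagonal entries of
  such a row and of its target column differ, a shear automorphism
  N_{j,j+1} \<mapsto> N_{j,j+1} + a N_target removes the entry, so a canonical form would not be minimal.
  If they agree for all n - 1 pairs, the additivity of the diagonal along the grading forces the
  whole diagonal to vanish (this uses n \<ge> 4 and characteristic 0), and then ad X is nilpotent.
  Hence at most n - 2 entries survive. Finally the diagonal automorphism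
  N_{ik} \<mapsto> r_i \<cdots> r_{k-1} N_{ik} followed by X \<mapsto> r_1 \<cdots> r_{n-1} X multiplies the surviving entry of
  row N_{j,j+1} by r_j, or by r_j^2 when j = 1 or j = n - 1; square roots exist in \<complex>, and
  in \<real> up to sign.\<close>

section \<open>Matrix units and the derivation identities\<close>

lemma Pn_iff [simp]: "(i,k) \<in> Pn n \<longleftrightarrow> 1 \<le> i \<and> i < k \<and> k \<le> n"
  by (simp add: Pn_def)

lemma finite_Pn [simp]: "finite (Pn n)"
proof -
  have "Pn n \<subseteq> {1..n} \<times> {1..n}" by (auto simp: Pn_def)
  thus ?thesis by (rule finite_subset) auto
qed

lemma Tn_iff: "v \<in> Tn n \<longleftrightarrow> (\<forall>p. p \<notin> Pn n \<longrightarrow> v p = 0)"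
  by (simp add: Tn_def)

lemma Tn_outside: "v \<in> Tn n \<Longrightarrow> p \<notin> Pn n \<Longrightarrow> v p = 0"
  by (metis Tn_iff)

lemma Eu_apply: "Eu p q = (if q = p then 1 else 0)"
  by (simp add: Eu_def)

lemma brk_unit_right:
  assumes "(a,b) \<in> Pn n"
  shows "brk n v (Eu (a,b)) (x,y) = (if b = y then v (x,a) else 0) - (if x = a then v (b,y) else 0)"
proof -
  have "brk n v (Eu (a,b)) (x,y) = (\<Sum>j\<in>{1..n}. (if j = a then (if b = y then v (x,j) else 0) else 0))
      - (\<Sum>j\<in>{1..n}. (if j = b then (if x = a then v (j,y) else 0) else 0))"
    unfolding brk_def Eu_apply case_prod_conv sum_subtractf[symmetric] by (rule sum.cong) auto
  also have "\<dots> = (if b = y then v (x,a) else 0) - (if x = a then v (b,y) else 0)"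
    using assms by (simp only: sum.delta finite_atLeastAtMost) simp
  finally show ?thesis .
qed

lemma brk_unit_left:
  assumes "(i,k) \<in> Pn n"
  shows "brk n (Eu (i,k)) w (x,y) = (if x = i then w (k,y) else 0) - (if y = k then w (x,i) else 0)"
proof -
  have "brk n (Eu (i,k)) w (x,y) = (\<Sum>j\<in>{1..n}. (if j = k then (if x = i then w (j,y) else 0) else 0))
      - (\<Sum>j\<in>{1..n}. (if j = i then (if y = k then w (x,j) else 0) else 0))"
    unfolding brk_def Eu_apply case_prod_conv sum_subtractf[symmetric] by (rule sum.cong) auto
  also have "\<dots> = (if x = i then w (k,y) else 0) - (if y = k then w (x,i) else 0)"
    using assms by (simp only: sum.delta finite_atLeastAtMost) simp
  finally show ?thesis .
qed

lemma brk_unit_unit: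
  assumes "(i,k) \<in> Pn n" "(a,b) \<in> Pn n"
  shows "brk n (Eu (i,k)) (Eu (a,b)) q
    = (if k = a \<and> q = (i,b) then 1 else 0) - (if b = i \<and> q = (a,k) then 1 else 0)"
proof -
  obtain x y where q: "q = (x,y)" by (cases q)
  have "brk n (Eu (i,k)) (Eu (a,b)) (x,y)
      = (if x = i then Eu (a,b) (k,y) else 0) - (if y = k then Eu (a,b) (x,i) else 0)"
    by (rule brk_unit_left[OF assms(1)])
  thus ?thesis using assms unfolding q Eu_def by auto
qed

lemma linmap_unit:
  assumes "p \<in> Pn n"
  shows "linmap n B (Eu p) = (\<lambda>q. if q \<in> Pn n then B p q else 0)"
  using assms by (simp add: linmap_def Eu_def if_distrib[where f="\<lambda>x. x * _"] cong: if_cong)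

text \<open>The structure matrix with its junk entries outside Pn \<times> Pn set to zero.\<close>

definition mat_entry :: "nat \<Rightarrow> (nat \<times> nat \<Rightarrow> nat \<times> nat \<Rightarrow> 'a::field) \<Rightarrow> nat \<times> nat \<Rightarrow> nat \<times> nat \<Rightarrow> 'a" where
  "mat_entry n B s t = (if s \<in> Pn n \<and> t \<in> Pn n then B s t else 0)"

text \<open>The derivation rule D[N_ik, N_ab] = [D N_ik, N_ab] + [N_ik, D N_ab], read off at N_xy.\<close>

definition derivation_eqs :: "nat \<Rightarrow> (nat \<times> nat \<Rightarrow> nat \<times> nat \<Rightarrow> 'a::field) \<Rightarrow> bool" where
  "derivation_eqs n e \<longleftrightarrow> (\<forall>i k a b x y. (i,k) \<in> Pn n \<longrightarrow> (a,b) \<in> Pn n \<longrightarrow> (x,y) \<in> Pn n \<longrightarrow>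
     (if k = a then e (i,b) (x,y) else 0) - (if b = i then e (a,k) (x,y) else 0) =
     (if b = y then e (i,k) (x,a) else 0) - (if x = a then e (i,k) (b,y) else 0)
     + (if x = i then e (a,b) (k,y) else 0) - (if y = k then e (a,b) (x,i) else 0))"

lemma derivation_eqsD:
  assumes "derivation_eqs n e" "(i,k) \<in> Pn n" "(a,b) \<in> Pn n" "(x,y) \<in> Pn n"
  shows "(if k = a then e (i,b) (x,y) else 0) - (if b = i then e (a,k) (x,y) else 0) =
     (if b = y then e (i,k) (x,a) else 0) - (if x = a then e (i,k) (b,y) else 0)
     + (if x = i then e (a,b) (k,y) else 0) - (if y = k then e (a,b) (x,i) else 0)"
  using assms unfolding derivation_eqs_def by blast

lemma linmap_brk_units:
  assumes "(i,k) \<in> Pn n" "(a,b) \<in> Pn n" "r \<in> Pn n"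
  shows "linmap n B (brk n (Eu (i,k)) (Eu (a,b))) r
    = (if k = a then B (i,b) r else 0) - (if b = i then B (a,k) r else 0)"
proof -
  have "linmap n B (brk n (Eu (i,k)) (Eu (a,b))) r =
     (\<Sum>p\<in>Pn n. (if p = (i,b) then (if k = a then B p r else 0) else 0))
     - (\<Sum>p\<in>Pn n. (if p = (a,k) then (if b = i then B p r else 0) else 0))"
    unfolding linmap_def brk_unit_unit[OF assms(1,2)] using assms(3)
    by (simp only: if_True sum_subtractf[symmetric]) (rule sum.cong, auto)
  also have "\<dots> = (if k = a then B (i,b) r else 0) - (if b = i then B (a,k) r else 0)"
    using assms by (simp only: sum.delta finite_Pn) auto
  finally show ?thesis .
qed

lemma linmap_unit_entry: "p \<in> Pn n \<Longrightarrow> linmap n B (Eu p) = mat_entry n B p"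
  by (rule ext) (simp add: linmap_unit mat_entry_def)

lemma derivation_eqs_mat_entry:
  assumes "is_derivation n B"
  shows "derivation_eqs n (mat_entry n B)"
  unfolding derivation_eqs_def
proof (intro allI impI)
  fix i k a b x y assume h: "(i,k) \<in> Pn n" "(a,b) \<in> Pn n" "(x,y) \<in> Pn n"
  let ?e = "mat_entry n B"
  have units: "Eu (i,k) \<in> Tn n" "Eu (a,b) \<in> Tn n" using h by (auto simp: Tn_def Eu_def)
  have "linmap n B (brk n (Eu (i,k)) (Eu (a,b))) (x,y) =
     brk n (linmap n B (Eu (i,k))) (Eu (a,b)) (x,y) + brk n (Eu (i,k)) (linmap n B (Eu (a,b))) (x,y)"
    using assms[unfolded is_derivation_def, rule_format, OF units] by metis
  moreover have "linmap n B (brk n (Eu (i,k)) (Eu (a,b))) (x,y)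
      = (if k = a then ?e (i,b) (x,y) else 0) - (if b = i then ?e (a,k) (x,y) else 0)"
    unfolding linmap_brk_units[OF h] using h by (auto simp: mat_entry_def)
  moreover have "brk n (linmap n B (Eu (i,k))) (Eu (a,b)) (x,y)
      = (if b = y then ?e (i,k) (x,a) else 0) - (if x = a then ?e (i,k) (b,y) else 0)"
    unfolding linmap_unit_entry[OF h(1)] by (rule brk_unit_right[OF h(2)])
  moreover have "brk n (Eu (i,k)) (linmap n B (Eu (a,b))) (x,y)
      = (if x = i then ?e (a,b) (k,y) else 0) - (if y = k then ?e (a,b) (x,i) else 0)"
    unfolding linmap_unit_entry[OF h(2)] by (rule brk_unit_left[OF h(1)])
  ultimately show "(if k = a then ?e (i,b) (x,y) else 0) - (if b = i then ?e (a,k) (x,y) else 0) =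
     (if b = y then ?e (i,k) (x,a) else 0) - (if x = a then ?e (i,k) (b,y) else 0)
     + (if x = i then ?e (a,b) (k,y) else 0) - (if y = k then ?e (a,b) (x,i) else 0)"
    by simp
qed

section \<open>The entries surviving the reduction\<close>

text \<open>The column of the only off-diagonal entry that can survive in the row N_{j,j+1}.\<close>

definition target :: "nat \<Rightarrow> nat \<Rightarrow> nat \<times> nat" where
  "target n j = (if j = 1 then (2,n) else if j = n - 1 then (1,n-1) else (1,n))"

definition is_target_entry :: "nat \<Rightarrow> nat \<times> nat \<Rightarrow> nat \<times> nat \<Rightarrow> bool" where
  "is_target_entry n s t \<longleftrightarrow> (\<exists>j. 1 \<le> j \<and> j < n \<and> s = (j,j+1) \<and> t = target n j)"

lemma target_Pn: "4 \<le> n \<Longrightarrow> 1 \<le> j \<Longrightarrow> j < n \<Longrightarrow> target n j \<in> Pn n"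
  by (auto simp: target_def)

lemma target_not_simple: "4 \<le> n \<Longrightarrow> 1 \<le> j \<Longrightarrow> j < n \<Longrightarrow> target n j \<noteq> (l, l+1)"
  by (auto simp: target_def)

lemma is_target_entry_Pn: "4 \<le> n \<Longrightarrow> is_target_entry n s t \<Longrightarrow> s \<in> Pn n \<and> t \<in> Pn n \<and> s \<noteq> t"
  by (auto simp: is_target_entry_def target_def split: if_splits)

lemma not_is_target_entry_simple: "4 \<le> n \<Longrightarrow> \<not> is_target_entry n s (l,l+1)"
  by (auto simp: is_target_entry_def target_def split: if_splits)

lemma not_is_target_entry_from_target: "4 \<le> n \<Longrightarrow> 1 \<le> j \<Longrightarrow> j < n \<Longrightarrow> \<not> is_target_entry n (target n j) t"
  by (auto simp: is_target_entry_def target_def split: if_splits)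

lemma is_target_entry_simple_iff: "is_target_entry n (j, Suc j) t \<longleftrightarrow> 1 \<le> j \<and> j < n \<and> t = target n j"
  by (auto simp: is_target_entry_def)

lemma is_target_entry_shape:
  "4 \<le> n \<Longrightarrow> is_target_entry n s t \<Longrightarrow> fst t \<le> 2 \<and> n - 1 \<le> snd t \<and> snd s = fst s + 1
     \<and> (fst t = 2 \<longrightarrow> s = (1,2)) \<and> (snd t = n - 1 \<longrightarrow> s = (n-1,n))"
  by (auto simp: is_target_entry_def target_def split: if_splits)

text \<open>The (restricted) matrix of a derivation after the reduction by reducing_shift below.\<close>

locale reduced_derivation =
  fixes n :: nat and e :: "nat \<times> nat \<Rightarrow> nat \<times> nat \<Rightarrow> 'a::field_char_0"
  assumes n4: "4 \<le> n"
    and eqs: "derivation_eqs n e"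
    and zero_same_start: "\<And>a b. 2 \<le> a \<Longrightarrow> a < b \<Longrightarrow> b \<le> n \<Longrightarrow> e (a-1,a) (a-1,b) = 0"
    and zero_same_end: "\<And>b. 1 < b \<Longrightarrow> b < n \<Longrightarrow> e (b,b+1) (1,b+1) = 0"
    and zero_outside: "\<And>s t. s \<notin> Pn n \<or> t \<notin> Pn n \<Longrightarrow> e s t = 0"
begin

lemma simple_root_entry_zero_same_end:
  assumes "1 \<le> x" "x < j" "j < n"
  shows "e (j,j+1) (x,j+1) = 0"
proof (cases "x = 1")
  case True thus ?thesis using zero_same_end[of j] assms by simp
next
  case False
  have P: "(x-1,x) \<in> Pn n" "(j,j+1) \<in> Pn n" "(x-1,j+1) \<in> Pn n" using False assms by auto
  have "Suc j \<noteq> x - Suc 0" "x - Suc 0 \<noteq> j" using assms by arith+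
  hence "0 = e (x-1,x) (x-1,j) + e (j,j+1) (x,j+1)"
    using derivation_eqsD[OF eqs P] False assms by simp
  moreover have "e (x-1,x) (x-1,j) = 0" using zero_same_start[of x j] False assms by simp
  ultimately show ?thesis by simp
qed

text \<open>The derivation rule for [N_{j,j+1}, N_{yb}] at N_{xb}, resp. for [N_{j,j+1}, N_{ax}] at N_{ay},
  isolates the entry once the auxiliary index b, resp. a, avoids j and j + 1.\<close>

lemma simple_root_entry_zero_right:
  assumes "1 \<le> j" "j < n" "(x,y) \<in> Pn n" "x \<noteq> j" "y \<noteq> j+1"
    and "y < b" "b \<le> n" "b \<noteq> j" "b \<noteq> j+1"
  shows "e (j,j+1) (x,y) = 0"
proof -
  have "(j,j+1) \<in> Pn n" "(y,b) \<in> Pn n" "(x,b) \<in> Pn n" using assms by auto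
  from derivation_eqsD[OF eqs this] show ?thesis using assms by simp
qed

lemma simple_root_entry_zero_left:
  assumes "1 \<le> j" "j < n" "(x,y) \<in> Pn n" "x \<noteq> j" "y \<noteq> j+1"
    and "1 \<le> a" "a < x" "a \<noteq> j" "a \<noteq> j+1"
  shows "e (j,j+1) (x,y) = 0"
proof -
  have "(j,j+1) \<in> Pn n" "(a,x) \<in> Pn n" "(a,y) \<in> Pn n" using assms by auto
  from derivation_eqsD[OF eqs this] show ?thesis using assms by simp
qed

text \<open>The two remaining entries are determined by a pair of identities whose difference is
  twice the entry; here the characteristic matters.\<close>

lemma entry_1_2_at_3_n: "e (1,2) (3,n) = 0"
proof -
  have P: "(1,2) \<in> Pn n" "(2,3) \<in> Pn n" "(2,n) \<in> Pn n" "(1,3) \<in> Pn n" "(1,n) \<in> Pn n"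
    using n4 by auto
  from derivation_eqsD[OF eqs P(1,2,3)] have "e (1,3) (2,n) = - e (1,2) (3,n)" using n4 by simp
  moreover from derivation_eqsD[OF eqs P(1,4,5)] have "0 = - e (1,2) (3,n) + e (1,3) (2,n)"
    using n4 by simp
  ultimately show ?thesis by simp
qed

lemma entry_last_at_1_n_minus_2: "e (n-1,n) (1,n-2) = 0"
proof -
  obtain m where m: "n = Suc (Suc (Suc (Suc m)))"
  proof
    show "n = Suc (Suc (Suc (Suc (n - 4))))" using n4 by simp
  qed
  have P: "(n-2,n-1) \<in> Pn n" "(n-1,n) \<in> Pn n" "(1,n-1) \<in> Pn n" "(n-2,n) \<in> Pn n" "(1,n) \<in> Pn n"
    using n4 by auto
  from derivation_eqsD[OF eqs P(1,2,3)] have "e (n-2,n) (1,n-1) = - e (n-1,n) (1,n-2)"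
    unfolding m by simp
  moreover from derivation_eqsD[OF eqs P(4,2,5)] have "0 = e (n-2,n) (1,n-1) - e (n-1,n) (1,n-2)"
    unfolding m by simp
  ultimately show ?thesis by simp
qed

lemma simple_root_entry_zero:
  assumes j: "1 \<le> j" "j < n" and xy: "(x,y) \<in> Pn n" and ne: "(x,y) \<noteq> (j,j+1)"
    and nt: "(x,y) \<noteq> target n j"
  shows "e (j,j+1) (x,y) = 0"
proof -
  have nt': "\<not> (j = 1 \<and> x = 2 \<and> y = n)" "\<not> (2 \<le> j \<and> j + 2 \<le> n \<and> x = 1 \<and> y = n)"
    "\<not> (j = n - 1 \<and> x = 1 \<and> y = n - 1)"
    using nt n4 by (auto simp: target_def split: if_splits)
  have x1: "1 \<le> x" "x < y" "y \<le> n" using xy by auto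
  consider "x = j" | "x \<noteq> j" "y = j + 1"
    | "x \<noteq> j" "y \<noteq> j + 1" "(y < n \<and> j + 2 \<le> n) \<or> (j + 1 = n \<and> y + 3 \<le> n)"
    | "x \<noteq> j" "y \<noteq> j + 1" "(2 \<le> x \<and> 2 \<le> j) \<or> (j = 1 \<and> 4 \<le> x)"
    | "j = 1" "x = 3" "y = n" | "j = n - 1" "x = 1" "y = n - 2"
  proof -
    have "(j = 1 \<and> x = 3 \<and> y = n) \<or> (j = n - 1 \<and> x = 1 \<and> y = n - 2)"
      if h: "x \<noteq> j" "y \<noteq> j + 1" "\<not> ((y < n \<and> j + 2 \<le> n) \<or> (j + 1 = n \<and> y + 3 \<le> n))"
        "\<not> ((2 \<le> x \<and> 2 \<le> j) \<or> (j = 1 \<and> 4 \<le> x))"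
      using h nt' x1 j n4 by presburger
    thus thesis using that by blast
  qed
  thus ?thesis
  proof cases
    case 1 thus ?thesis using zero_same_start[of "j+1" y] ne xy j by simp
  next
    case 2 thus ?thesis using simple_root_entry_zero_same_end[of x j] xy j by simp
  next
    case 3 thus ?thesis
      using simple_root_entry_zero_right[OF j xy, of "if y < n \<and> j + 2 \<le> n then n else y + 1"] by auto
  next
    case 4 thus ?thesis
      using simple_root_entry_zero_left[OF j xy, of "if 2 \<le> x \<and> 2 \<le> j then 1 else x - 1"] xy by auto
  next
    case 5 thus ?thesis using entry_1_2_at_3_n by (simp add: numeral_2_eq_2)
  next
    case 6 thus ?thesis using entry_last_at_1_n_minus_2 n4 by simp
  qed
qed

lemma non_target_entry_zero:
  assumes "t \<noteq> s" "\<not> is_target_entry n s t"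
  shows "e s t = 0"
proof -
  obtain i k where s: "s = (i,k)" by (cases s)
  have "e (i,k) t = 0" if "(i,k) \<in> Pn n" "t \<in> Pn n" "t \<noteq> (i,k)" "\<not> is_target_entry n (i,k) t"
    using that
  proof (induction "k - i" arbitrary: i k t rule: less_induct)
    case less
    obtain x y where t: "t = (x,y)" by (cases t)
    show ?case
    proof (cases "k = i + 1")
      case True
      thus ?thesis using simple_root_entry_zero[of i x y] less.prems t
        by (auto simp: is_target_entry_simple_iff)
    next
      case False
      hence k2: "i + 2 \<le> k" using less.prems by auto
      have P: "(i,k-1) \<in> Pn n" "(k-1,k) \<in> Pn n" "(x,y) \<in> Pn n" using less.prems k2 t by auto
      have shorter: "e (i,k-1) t' = 0" if "t' \<noteq> (i,k-1)" "\<not> is_target_entry n (i,k-1) t'" for t'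
        using less.hyps[of "k-1" i t'] that P(1) k2 zero_outside by (cases "t' \<in> Pn n") auto
      have simple: "e (k-1,k) t' = 0" if "t' \<noteq> (k-1,k)" "\<not> is_target_entry n (k-1,k) t'" for t'
      proof (cases "t' \<in> Pn n")
        case True
        have "1 \<le> k - 1" "k - 1 < n" "Suc (k - 1) = k" using k2 less.prems(1) by auto
        thus ?thesis using simple_root_entry_zero[of "k-1" "fst t'" "snd t'"]
            is_target_entry_simple_iff[of n "k-1" t'] that True by auto
      qed (use zero_outside in auto)
      note shape = is_target_entry_shape[OF n4]
      have "(if k = y then e (i,k-1) (x,k-1) else 0) = 0"
      proof (cases "k = y")
        case True
        have "\<not> is_target_entry n (i,k-1) (x,k-1)" using shape[of "(i,k-1)" "(x,k-1)"] less.prems(1) n4 by auto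
        thus ?thesis using shorter[of "(x,k-1)"] less.prems t True by auto
      qed simp
      moreover have "(if x = k - 1 then e (i,k-1) (k,y) else 0) = 0"
      proof -
        have "\<not> is_target_entry n (i,k-1) (k,y)" using shape[of "(i,k-1)" "(k,y)"] k2 by auto
        thus ?thesis using shorter[of "(k,y)"] k2 by auto
      qed
      moreover have "(if x = i then e (k-1,k) (k-1,y) else 0) = 0"
      proof (cases "x = i")
        case True
        have "\<not> is_target_entry n (k-1,k) (k-1,y)" using shape[of "(k-1,k)" "(k-1,y)"] less.prems(1) n4 k2 by auto
        thus ?thesis using simple[of "(k-1,y)"] less.prems t True by auto
      qed simp
      moreover have "(if y = k - 1 then e (k-1,k) (x,i) else 0) = 0"
      proof -
        have "\<not> is_target_entry n (k-1,k) (x,i)" using shape[of "(k-1,k)" "(x,i)"] less.prems(1) k2 by auto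
        thus ?thesis using simple[of "(x,i)"] k2 by auto
      qed
      ultimately show ?thesis using derivation_eqsD[OF eqs P] k2 t by simp
    qed
  qed
  thus ?thesis using assms s zero_outside by (cases "s \<in> Pn n \<and> t \<in> Pn n") auto
qed

end

section \<open>Brackets and linear maps on T(n)\<close>

definition matmul :: "nat \<Rightarrow> (nat \<times> nat \<Rightarrow> 'a::field) \<Rightarrow> (nat \<times> nat \<Rightarrow> 'a) \<Rightarrow> nat \<times> nat \<Rightarrow> 'a" where
  "matmul n u v = (\<lambda>(a,b). \<Sum>j\<in>{1..n}. u (a,j) * v (j,b))"

lemma matmul_assoc: "matmul n (matmul n u v) w = matmul n u (matmul n v w)"
proof
  fix q :: "nat \<times> nat" obtain a b where q: "q = (a,b)" by (cases q)
  show "matmul n (matmul n u v) w q = matmul n u (matmul n v w) q"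
    unfolding q matmul_def case_prod_conv sum_distrib_left sum_distrib_right
    by (subst sum.swap) (simp add: mult.assoc)
qed

lemma matmul_diff_left: "matmul n (\<lambda>q. u q - v q) w = (\<lambda>q. matmul n u w q - matmul n v w q)"
  by (rule ext) (auto simp: matmul_def sum_subtractf left_diff_distrib)

lemma matmul_diff_right: "matmul n w (\<lambda>q. u q - v q) = (\<lambda>q. matmul n w u q - matmul n w v q)"
  by (rule ext) (auto simp: matmul_def sum_subtractf right_diff_distrib)

lemma matmul_add_left: "matmul n (\<lambda>q. u q + v q) w = (\<lambda>q. matmul n u w q + matmul n v w q)"
  by (rule ext) (auto simp: matmul_def sum.distrib distrib_right)

lemma matmul_add_right: "matmul n w (\<lambda>q. u q + v q) = (\<lambda>q. matmul n w u q + matmul n w v q)"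
  by (rule ext) (auto simp: matmul_def sum.distrib distrib_left)

lemma brk_eq_matmul: "brk n u v = (\<lambda>q. matmul n u v q - matmul n v u q)"
  by (rule ext) (auto simp: brk_def matmul_def sum_subtractf)

lemma brk_jacobi: "brk n m (brk n v w) q = brk n (brk n m v) w q + brk n v (brk n m w) q"
proof -
  have "brk n m (brk n v w) q = matmul n m (matmul n v w) q - matmul n m (matmul n w v) q - matmul n (matmul n v w) m q + matmul n (matmul n w v) m q"
    by (simp add: brk_eq_matmul matmul_diff_left matmul_diff_right)
  moreover have "brk n (brk n m v) w q + brk n v (brk n m w) q =
     matmul n (matmul n m v) w q - matmul n (matmul n v m) w q - matmul n w (matmul n m v) q + matmul n w (matmul n v m) q
     + matmul n v (matmul n m w) q - matmul n v (matmul n w m) q - matmul n (matmul n m w) v q + matmul n (matmul n w m) v q"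
    by (simp add: brk_eq_matmul matmul_diff_left matmul_diff_right)
  ultimately show ?thesis by (simp add: matmul_assoc)
qed

lemma brk_add_left: "brk n (\<lambda>q. u q + v q) w = (\<lambda>q. brk n u w q + brk n v w q)"
  by (simp add: brk_eq_matmul matmul_add_left matmul_add_right fun_eq_iff algebra_simps)

lemma brk_add_right: "brk n w (\<lambda>q. u q + v q) = (\<lambda>q. brk n w u q + brk n w v q)"
  by (simp add: brk_eq_matmul matmul_add_left matmul_add_right fun_eq_iff algebra_simps)

lemma brk_scale_left: "brk n (\<lambda>q. c * u q) w = (\<lambda>q. c * brk n u w q)"
  by (rule ext) (auto simp: brk_def sum_distrib_left algebra_simps)

lemma brk_scale_right: "brk n w (\<lambda>q. c * u q) = (\<lambda>q. c * brk n w u q)"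
  by (rule ext) (auto simp: brk_def sum_distrib_left algebra_simps)

lemma brk_Tn: assumes "v \<in> Tn n" "w \<in> Tn n" shows "brk n v w \<in> Tn n"
  unfolding Tn_iff
proof (intro allI impI)
  fix q assume q: "q \<notin> Pn n"
  obtain a b where ab: "q = (a,b)" by (cases q)
  have "v (a,j) * w (j,b) - w (a,j) * v (j,b) = 0" if "j \<in> {1..n}" for j
  proof -
    have "\<not> ((a,j) \<in> Pn n \<and> (j,b) \<in> Pn n)" using q ab that by auto
    thus ?thesis using assms by (auto simp: Tn_iff)
  qed
  thus "brk n v w q = 0" unfolding brk_def ab by simp
qed

lemma Tn_expand: "v \<in> Tn n \<Longrightarrow> v = (\<lambda>q. \<Sum>p\<in>Pn n. v p * Eu p q)"
proof
  fix q assume v: "v \<in> Tn n"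
  have "(\<Sum>p\<in>Pn n. v p * Eu p q) = (\<Sum>p\<in>Pn n. (if p = q then v p else 0))"
    by (rule sum.cong) (auto simp: Eu_def)
  also have "\<dots> = v q" using v by (simp only: sum.delta finite_Pn) (metis Tn_iff)
  finally show "v q = (\<Sum>p\<in>Pn n. v p * Eu p q)" by simp
qed

lemma brk_lin_right:
  "brk n u (\<lambda>q. \<Sum>p\<in>P. c p * f p q) r = (\<Sum>p\<in>P. c p * brk n u (f p) r)"
proof -
  obtain x y where r: "r = (x,y)" by (cases r)
  have "brk n u (\<lambda>q. \<Sum>p\<in>P. c p * f p q) r =
    (\<Sum>j\<in>{1..n}. \<Sum>p\<in>P. c p * (u (x,j) * f p (j,y) - f p (x,j) * u (j,y)))"
    unfolding brk_def r case_prod_conv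
    by (rule sum.cong) (auto simp: sum_distrib_left sum_distrib_right sum_subtractf[symmetric] algebra_simps)
  also have "\<dots> = (\<Sum>p\<in>P. c p * brk n u (f p) r)"
    unfolding brk_def r case_prod_conv
    by (subst sum.swap) (simp add: sum_distrib_left)
  finally show ?thesis .
qed

lemma linmap_Tn: "linmap n M v \<in> Tn n"
  by (simp add: linmap_def Tn_def)

lemma linmap_add_vec: "linmap n M (\<lambda>q. u q + w q) = (\<lambda>q. linmap n M u q + linmap n M w q)"
  by (rule ext) (simp add: linmap_def sum.distrib distrib_right)

lemma linmap_diff_vec: "linmap n M (\<lambda>q. u q - w q) = (\<lambda>q. linmap n M u q - linmap n M w q)"
  by (rule ext) (simp add: linmap_def sum_subtractf left_diff_distrib)

lemma linmap_scale_vec: "linmap n M (\<lambda>q. c * u q) = (\<lambda>q. c * linmap n M u q)"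
  by (rule ext) (simp add: linmap_def sum_distrib_left mult.assoc)

lemma linmap_zero_vec: "linmap n M (\<lambda>_. 0) = (\<lambda>_. 0)"
  by (rule ext) (simp add: linmap_def)

lemma linmap_add_mat: "linmap n (\<lambda>p q. M p q + N p q) v = (\<lambda>q. linmap n M v q + linmap n N v q)"
  by (rule ext) (simp add: linmap_def sum.distrib distrib_left)

lemma linmap_scale_mat: "linmap n (\<lambda>p q. c * M p q) v = (\<lambda>q. c * linmap n M v q)"
  by (rule ext) (simp add: linmap_def sum_distrib_left mult.left_commute)

lemma linmap_cong_mat: "(\<And>p q. p \<in> Pn n \<Longrightarrow> q \<in> Pn n \<Longrightarrow> M p q = N p q) \<Longrightarrow> linmap n M = linmap n N"
  by (intro ext) (auto simp: linmap_def intro!: sum.cong)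

lemma linmap_mat_mult: "linmap n M (linmap n N v) = linmap n (\<lambda>p s. \<Sum>r\<in>Pn n. N p r * M r s) v"
proof
  fix q
  have "(\<Sum>r\<in>Pn n. linmap n N v r * M r q) = (\<Sum>r\<in>Pn n. \<Sum>p\<in>Pn n. v p * N p r * M r q)"
    by (rule sum.cong) (auto simp: linmap_def sum_distrib_right)
  also have "\<dots> = (\<Sum>p\<in>Pn n. v p * (\<Sum>r\<in>Pn n. N p r * M r q))"
    by (subst sum.swap) (simp add: sum_distrib_left mult.assoc)
  finally show "linmap n M (linmap n N v) q = linmap n (\<lambda>p s. \<Sum>r\<in>Pn n. N p r * M r s) v q"
    by (simp add: linmap_def)
qed

lemma linmap_intertwine:
  assumes "\<forall>p\<in>Pn n. \<forall>s\<in>Pn n. (\<Sum>r\<in>Pn n. G p r * A r s) = (\<Sum>r\<in>Pn n. A' p r * G r s)"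
  shows "linmap n A (linmap n G v) = linmap n G (linmap n A' v)"
  unfolding linmap_mat_mult
proof (rule arg_cong[where f="\<lambda>M. M v"], rule linmap_cong_mat)
  fix p q assume "p \<in> Pn n" "q \<in> Pn n"
  thus "(\<Sum>r\<in>Pn n. G p r * A r q) = (\<Sum>r\<in>Pn n. A' p r * G r q)" using assms by blast
qed

section \<open>Admissible transformations preserve derivations\<close>

definition ad_mat :: "nat \<Rightarrow> (nat \<times> nat \<Rightarrow> 'a::field) \<Rightarrow> nat \<times> nat \<Rightarrow> nat \<times> nat \<Rightarrow> 'a" where
  "ad_mat n \<mu> = (\<lambda>p q. brk n \<mu> (Eu p) q)"

lemma linmap_ad_mat_restrict: assumes "v \<in> Tn n" shows "linmap n (ad_mat n \<mu>) v = (\<lambda>q. if q \<in> Pn n then brk n \<mu> v q else 0)"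
proof
  fix q
  have "brk n \<mu> v q = brk n \<mu> (\<lambda>q. \<Sum>p\<in>Pn n. v p * Eu p q) q" using Tn_expand[OF assms] by metis
  also have "\<dots> = (\<Sum>p\<in>Pn n. v p * brk n \<mu> (Eu p) q)" by (rule brk_lin_right)
  finally show "linmap n (ad_mat n \<mu>) v q = (if q \<in> Pn n then brk n \<mu> v q else 0)"
    by (simp add: linmap_def ad_mat_def)
qed

lemma linmap_ad_mat: assumes "v \<in> Tn n" "\<mu> \<in> Tn n" shows "linmap n (ad_mat n \<mu>) v = brk n \<mu> v"
proof -
  have "brk n \<mu> v \<in> Tn n" using assms by (rule_tac brk_Tn) auto
  thus ?thesis unfolding linmap_ad_mat_restrict[OF assms(1)] by (auto simp: Tn_def)
qed

lemma ad_mat_derivation: assumes "\<mu> \<in> Tn n" shows "is_derivation n (ad_mat n \<mu>)"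
  unfolding is_derivation_def
proof (intro ballI)
  fix v w :: "nat \<times> nat \<Rightarrow> 'a" assume v: "v \<in> Tn n" and w: "w \<in> Tn n"
  have vw: "brk n v w \<in> Tn n" using v w by (rule brk_Tn)
  show "linmap n (ad_mat n \<mu>) (brk n v w) = (\<lambda>q. brk n (linmap n (ad_mat n \<mu>) v) w q + brk n v (linmap n (ad_mat n \<mu>) w) q)"
    unfolding linmap_ad_mat[OF vw assms] linmap_ad_mat[OF v assms] linmap_ad_mat[OF w assms]
    by (rule ext) (rule brk_jacobi)
qed

lemma derivation_add: assumes "is_derivation n A" "is_derivation n B"
  shows "is_derivation n (\<lambda>p q. A p q + B p q)"
  unfolding is_derivation_def linmap_add_mat
proof (intro ballI)
  fix v w :: "nat \<times> nat \<Rightarrow> 'a" assume v: "v \<in> Tn n" and w: "w \<in> Tn n"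
  show "(\<lambda>q. linmap n A (brk n v w) q + linmap n B (brk n v w) q) =
         (\<lambda>q. brk n (\<lambda>q. linmap n A v q + linmap n B v q) w q + brk n v (\<lambda>q. linmap n A w q + linmap n B w q) q)"
    using assms[unfolded is_derivation_def, rule_format, OF v w]
    by (simp add: brk_add_left brk_add_right fun_eq_iff)
qed

lemma derivation_cong: "is_derivation n A \<Longrightarrow> (\<And>p q. p \<in> Pn n \<Longrightarrow> q \<in> Pn n \<Longrightarrow> A' p q = A p q) \<Longrightarrow> is_derivation n A'"
  unfolding is_derivation_def using linmap_cong_mat[of n A' A] by simp

lemma shift_step_derivation:
  assumes "is_derivation n A" "\<mu> \<in> Tn n" "\<forall>p\<in>Pn n. \<forall>q\<in>Pn n. A' p q = A p q + brk n \<mu> (Eu p) q"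
  shows "is_derivation n A'"
proof -
  have "is_derivation n (\<lambda>p q. A p q + ad_mat n \<mu> p q)"
    by (rule derivation_add[OF assms(1) ad_mat_derivation[OF assms(2)]])
  thus ?thesis by (rule derivation_cong) (use assms(3) in \<open>auto simp: ad_mat_def\<close>)
qed

lemma scale_step_derivation:
  assumes "is_derivation n A" "\<forall>p\<in>Pn n. \<forall>q\<in>Pn n. A' p q = c * A p q"
  shows "is_derivation n A'"
proof -
  have "is_derivation n (\<lambda>p q. c * A p q)"
    unfolding is_derivation_def linmap_scale_mat
    using assms(1)[unfolded is_derivation_def]
    by (simp add: brk_scale_left brk_scale_right fun_eq_iff distrib_left)
  thus ?thesis by (rule derivation_cong) (use assms(2) in auto)
qed

lemma automorphism_step_derivation:
  assumes D: "is_derivation n A" and bij: "bij_betw (linmap n G) (Tn n) (Tn n)"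
    and hom: "\<forall>v\<in>Tn n. \<forall>w\<in>Tn n. linmap n G (brk n v w) = (\<lambda>q. if q \<in> Pn n then brk n (linmap n G v) (linmap n G w) q else 0)"
    and rel: "\<forall>p\<in>Pn n. \<forall>s\<in>Pn n. (\<Sum>r\<in>Pn n. G p r * A r s) = (\<Sum>r\<in>Pn n. A' p r * G r s)"
  shows "is_derivation n A'"
  unfolding is_derivation_def
proof (intro ballI)
  fix v w :: "nat \<times> nat \<Rightarrow> 'a" assume v: "v \<in> Tn n" and w: "w \<in> Tn n"
  let ?g = "linmap n G"
  have hom': "?g (brk n x y) = brk n (?g x) (?g y)" if "x \<in> Tn n" "y \<in> Tn n" for x y
  proof -
    have "brk n (?g x) (?g y) \<in> Tn n" by (rule brk_Tn) (rule linmap_Tn)+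
    thus ?thesis unfolding hom[rule_format, OF that] by (auto simp: fun_eq_iff Tn_iff)
  qed
  have CR: "linmap n A (?g x) = ?g (linmap n A' x)" for x by (rule linmap_intertwine[OF rel])
  have vw: "brk n v w \<in> Tn n" using v w by (rule brk_Tn)
  have "?g (linmap n A' (brk n v w)) = linmap n A (?g (brk n v w))" by (rule CR[symmetric])
  also have "\<dots> = linmap n A (brk n (?g v) (?g w))" using hom'[OF v w] by simp
  also have "\<dots> = (\<lambda>q. brk n (linmap n A (?g v)) (?g w) q + brk n (?g v) (linmap n A (?g w)) q)"
    using D[unfolded is_derivation_def, rule_format, OF linmap_Tn linmap_Tn] by blast
  also have "\<dots> = (\<lambda>q. brk n (?g (linmap n A' v)) (?g w) q + brk n (?g v) (?g (linmap n A' w)) q)"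
    by (simp add: CR)
  also have "\<dots> = (\<lambda>q. ?g (brk n (linmap n A' v) w) q + ?g (brk n v (linmap n A' w)) q)"
    using hom'[OF linmap_Tn w] hom'[OF v linmap_Tn] by simp
  also have "\<dots> = ?g (\<lambda>q. brk n (linmap n A' v) w q + brk n v (linmap n A' w) q)"
    by (simp add: linmap_add_vec)
  finally have eq: "?g (linmap n A' (brk n v w)) = ?g (\<lambda>q. brk n (linmap n A' v) w q + brk n v (linmap n A' w) q)" .
  have inT: "(\<lambda>q. brk n (linmap n A' v) w q + brk n v (linmap n A' w) q) \<in> Tn n"
    using brk_Tn[OF linmap_Tn w, of A'] brk_Tn[OF v linmap_Tn, of A'] by (auto simp: Tn_iff)
  from bij have "inj_on ?g (Tn n)" by (rule bij_betw_imp_inj_on)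
  from inj_onD[OF this eq linmap_Tn inT]
  show "linmap n A' (brk n v w) = (\<lambda>q. brk n (linmap n A' v) w q + brk n v (linmap n A' w) q)" .
qed

lemma adm_step_derivation: "adm_step n A A' \<Longrightarrow> is_derivation n A \<Longrightarrow> is_derivation n A'"
  unfolding adm_step_def
proof (elim disjE bexE exE conjE)
  fix \<mu> assume "\<mu> \<in> Tn n" "\<forall>p\<in>Pn n. \<forall>q\<in>Pn n. A' p q = A p q + brk n \<mu> (Eu p) q" "is_derivation n A"
  thus "is_derivation n A'" by (rule_tac shift_step_derivation)
next
  fix G assume "bij_betw (linmap n G) (Tn n) (Tn n)"
   "\<forall>v\<in>Tn n. \<forall>w\<in>Tn n. linmap n G (brk n v w) = (\<lambda>q. if q \<in> Pn n then brk n (linmap n G v) (linmap n G w) q else 0)"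
   "\<forall>p\<in>Pn n. \<forall>s\<in>Pn n. (\<Sum>r\<in>Pn n. G p r * A r s) = (\<Sum>r\<in>Pn n. A' p r * G r s)" "is_derivation n A"
  thus "is_derivation n A'" by (rule_tac automorphism_step_derivation)
next
  fix c :: 'a assume "c \<noteq> 0" "\<forall>p\<in>Pn n. \<forall>q\<in>Pn n. A' p q = c * A p q" "is_derivation n A"
  thus "is_derivation n A'" by (rule_tac scale_step_derivation)
qed

lemma admissible_derivation: "admissible n A A' \<Longrightarrow> is_derivation n A \<Longrightarrow> is_derivation n A'"
  unfolding admissible_def
  by (induction rule: rtranclp_induct) (auto intro: adm_step_derivation)

section \<open>Admissible transformations reflect nilpotency\<close>

text \<open>Vectors supported on units N_ab of height b - a \<ge> j; derivations preserve this
  filtration and inner derivations raise it.\<close>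

definition height_ge :: "nat \<Rightarrow> nat \<Rightarrow> (nat \<times> nat \<Rightarrow> 'a::field) set" where
  "height_ge n j = {v \<in> Tn n. \<forall>a b. b - a < j \<longrightarrow> v (a,b) = 0}"

definition ad_nilpotent :: "nat \<Rightarrow> (nat \<times> nat \<Rightarrow> nat \<times> nat \<Rightarrow> 'a::field) \<Rightarrow> bool" where
  "ad_nilpotent n A \<longleftrightarrow> (\<exists>m. \<forall>v\<in>Tn n. (linmap n A ^^ m) v = (\<lambda>_. 0))"

lemma derivation_height_entry_zero:
  assumes D: "is_derivation n A" and ik: "(i,k) \<in> Pn n" and xy: "(x,y) \<in> Pn n"
    and lt: "y - x < k - i"
  shows "A (i,k) (x,y) = 0"
  using ik xy lt
proof (induction "k - i" arbitrary: i k x y rule: less_induct)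
  case less
  let ?e = "mat_entry n A"
  show ?case
  proof (cases "k = i + 1")
    case True thus ?thesis using less.prems by auto
  next
    case False
    hence k2: "i + 2 \<le> k" using less.prems by auto
    have P: "(i,k-1) \<in> Pn n" "(k-1,k) \<in> Pn n" using less.prems k2 by auto
    have shorter: "?e (i,k-1) (x',y') = 0" if "y' - x' < k - 1 - i" for x' y'
      using less.hyps[of "k-1" i x' y'] that P(1) k2 by (cases "(x',y') \<in> Pn n") (auto simp: mat_entry_def)
    have "(if k = y then ?e (i,k-1) (x,k-1) else 0) = 0"
      using shorter[where x'=x and y'="k-1"] less.prems by auto
    moreover have "(if x = k - 1 then ?e (i,k-1) (k,y) else 0) = 0"
      using shorter[where x'=k and y'=y] less.prems k2 by auto
    moreover have "(if x = i then ?e (k-1,k) (k-1,y) else 0) = 0"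
      using less.prems by (auto simp: mat_entry_def)
    moreover have "(if y = k - 1 then ?e (k-1,k) (x,i) else 0) = 0"
      using less.prems by (auto simp: mat_entry_def)
    ultimately have "?e (i,k) (x,y) = 0"
      using derivation_eqsD[OF derivation_eqs_mat_entry[OF D] P less.prems(2)] k2 by simp
    thus ?thesis using less.prems by (simp add: mat_entry_def)
  qed
qed

lemma height_ge_Tn: "v \<in> height_ge n j \<Longrightarrow> v \<in> Tn n" by (simp add: height_ge_def)

lemma height_ge_zero: "v \<in> height_ge n j \<Longrightarrow> b - a < j \<Longrightarrow> v (a,b) = 0" by (simp add: height_ge_def)

lemma height_geI: "v \<in> Tn n \<Longrightarrow> (\<And>a b. (a,b) \<in> Pn n \<Longrightarrow> b - a < j \<Longrightarrow> v (a,b) = 0) \<Longrightarrow> v \<in> height_ge n j"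
  unfolding height_ge_def by (auto simp: Tn_def)

lemma height_ge_diff: "u \<in> height_ge n j \<Longrightarrow> w \<in> height_ge n j \<Longrightarrow> (\<lambda>q. u q - w q) \<in> height_ge n j"
  unfolding height_ge_def Tn_def by auto

lemma height_ge_Suc: "u \<in> height_ge n (Suc j) \<Longrightarrow> u \<in> height_ge n j"
  unfolding height_ge_def by auto

lemma height_ge_one: "v \<in> Tn n \<Longrightarrow> v \<in> height_ge n 1"
  by (rule height_geI) auto

lemma height_ge_n: "v \<in> height_ge n n \<Longrightarrow> v = (\<lambda>_. 0)"
proof
  fix q :: "nat \<times> nat" assume v: "v \<in> height_ge n n"
  obtain a b where q: "q = (a,b)" by (cases q)
  show "v q = 0"
  proof (cases "(a,b) \<in> Pn n")
    case True hence "b - a < n" by auto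
    thus ?thesis using height_ge_zero[OF v] q by simp
  next
    case False thus ?thesis using height_ge_Tn[OF v] q unfolding Tn_def by auto
  qed
qed

lemma derivation_height_ge:
  assumes D: "is_derivation n A" and v: "v \<in> height_ge n j"
  shows "linmap n A v \<in> height_ge n j"
proof (rule height_geI[OF linmap_Tn])
  fix a b assume ab: "(a,b) \<in> Pn n" "b - a < j"
  have "v p * A p (a,b) = 0" if "p \<in> Pn n" for p
  proof -
    obtain i k where p: "p = (i,k)" by (cases p)
    show ?thesis
    proof (cases "k - i < j")
      case True thus ?thesis using height_ge_zero[OF v] p by simp
    next
      case False
      hence "b - a < k - i" using ab by arith
      thus ?thesis using derivation_height_entry_zero[OF D, of i k a b] p that ab by simp
    qed
  qed
  hence "(\<Sum>p\<in>Pn n. v p * A p (a,b)) = 0" by (intro sum.neutral) blast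
  thus "linmap n A v (a,b) = 0" using ab by (simp add: linmap_def)
qed

lemma brk_height_ge:
  assumes mu: "\<mu> \<in> Tn n" and v: "v \<in> height_ge n j"
  shows "brk n \<mu> v \<in> height_ge n (Suc j)"
proof (rule height_geI[OF brk_Tn[OF mu height_ge_Tn[OF v]]])
  fix a b assume ab: "(a,b) \<in> Pn n" "b - a < Suc j"
  have ab': "a < b" using ab by auto
  have "\<mu> (a,l) * v (l,b) - v (a,l) * \<mu> (l,b) = 0" if "l \<in> {1..n}" for l
  proof -
    have 1: "\<mu> (a,l) * v (l,b) = 0"
    proof (cases "a < l")
      case True hence "b - l < j" using ab(2) ab' by arith
      thus ?thesis using height_ge_zero[OF v] by simp
    next
      case False thus ?thesis using mu by (auto simp: Tn_def)
    qed
    have 2: "v (a,l) * \<mu> (l,b) = 0"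
    proof (cases "l < b")
      case True hence "l - a < j" using ab(2) ab' by arith
      thus ?thesis using height_ge_zero[OF v] by simp
    next
      case False thus ?thesis using mu by (auto simp: Tn_def)
    qed
    show ?thesis unfolding 1 2 by simp
  qed
  thus "brk n \<mu> v (a,b) = 0" by (simp add: brk_def)
qed

lemma iterate_raising_height_zero:
  fixes f :: "(nat \<times> nat \<Rightarrow> 'a::field) \<Rightarrow> nat \<times> nat \<Rightarrow> 'a"
  assumes raise: "\<And>v j. v \<in> height_ge n j \<Longrightarrow> f v \<in> height_ge n (Suc j)" and v: "v \<in> Tn n"
  shows "(f ^^ n) v = (\<lambda>_. 0)"
proof -
  have "(f ^^ t) v \<in> height_ge n (Suc t)" for t
  proof (induction t)
    case 0 show ?case using height_ge_one[OF v] by simp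
  next
    case (Suc t) thus ?case using raise by simp
  qed
  thus ?thesis using height_ge_n[OF height_ge_Suc] by blast
qed

lemma linmap_shift:
  assumes mu: "\<mu> \<in> Tn n" and rel: "\<forall>p\<in>Pn n. \<forall>q\<in>Pn n. A' p q = A p q + brk n \<mu> (Eu p) q"
    and v: "v \<in> Tn n"
  shows "linmap n A' v = (\<lambda>q. linmap n A v q + brk n \<mu> v q)"
proof -
  have "linmap n A' = linmap n (\<lambda>p q. A p q + ad_mat n \<mu> p q)"
    by (rule linmap_cong_mat) (use rel in \<open>auto simp: ad_mat_def\<close>)
  thus ?thesis using linmap_ad_mat[OF v mu] by (simp add: linmap_add_mat)
qed

lemma shift_power_height_ge:
  assumes D: "is_derivation n A" and mu: "\<mu> \<in> Tn n"
    and rel: "\<forall>p\<in>Pn n. \<forall>q\<in>Pn n. A' p q = A p q + brk n \<mu> (Eu p) q"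
    and v: "v \<in> height_ge n j"
  shows "(\<lambda>q. (linmap n A ^^ k) v q - (linmap n A' ^^ k) v q) \<in> height_ge n (Suc j)"
proof (induction k)
  case 0 show ?case by (simp add: height_ge_def Tn_def)
next
  case (Suc k)
  let ?L = "linmap n A" and ?L' = "linmap n A'"
  let ?a = "(?L ^^ k) v" and ?b = "(?L' ^^ k) v"
  have b: "?b \<in> height_ge n j"
    using v by (induction k) (auto intro: derivation_height_ge[OF shift_step_derivation[OF D mu rel]])
  have "(\<lambda>q. (?L ^^ Suc k) v q - (?L' ^^ Suc k) v q) = (\<lambda>q. ?L (\<lambda>q. ?a q - ?b q) q - brk n \<mu> ?b q)"
    using linmap_shift[OF mu rel height_ge_Tn[OF b]] by (simp add: linmap_diff_vec fun_eq_iff)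
  thus ?case
    using height_ge_diff[OF derivation_height_ge[OF D Suc.IH] brk_height_ge[OF mu b]] by simp
qed

lemma shift_step_nilpotent:
  assumes D: "is_derivation n A" and mu: "\<mu> \<in> Tn n"
    and rel: "\<forall>p\<in>Pn n. \<forall>q\<in>Pn n. A' p q = A p q + brk n \<mu> (Eu p) q"
    and N: "ad_nilpotent n A'"
  shows "ad_nilpotent n A"
proof -
  from N obtain m where m: "\<forall>v\<in>Tn n. (linmap n A' ^^ m) v = (\<lambda>_. 0)" unfolding ad_nilpotent_def by blast
  have "(linmap n A ^^ m) v \<in> height_ge n (Suc j)" if "v \<in> height_ge n j" for v j
    using shift_power_height_ge[OF D mu rel that, of m] m height_ge_Tn[OF that] by simp
  hence "((linmap n A ^^ m) ^^ n) v = (\<lambda>_. 0)" if "v \<in> Tn n" for v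
    using iterate_raising_height_zero that by blast
  thus ?thesis unfolding ad_nilpotent_def funpow_mult by blast
qed

lemma funpow_intertwine: assumes "\<And>x. f (g x) = g (h x)" shows "(f ^^ k) (g x) = g ((h ^^ k) x)"
  by (induction k) (simp_all add: assms)

lemma automorphism_step_nilpotent:
  assumes bij: "bij_betw (linmap n G) (Tn n) (Tn n)"
    and rel: "\<forall>p\<in>Pn n. \<forall>s\<in>Pn n. (\<Sum>r\<in>Pn n. G p r * A r s) = (\<Sum>r\<in>Pn n. A' p r * G r s)"
    and N: "ad_nilpotent n A'"
  shows "ad_nilpotent n A"
proof -
  from N obtain m where m: "\<forall>v\<in>Tn n. (linmap n A' ^^ m) v = (\<lambda>_. 0)" unfolding ad_nilpotent_def by blast
  have "(linmap n A ^^ m) u = (\<lambda>_. 0)" if u: "u \<in> Tn n" for u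
  proof -
    obtain v where v: "v \<in> Tn n" "u = linmap n G v" using bij u unfolding bij_betw_def by auto
    have "(linmap n A ^^ m) (linmap n G v) = linmap n G ((linmap n A' ^^ m) v)"
      by (rule funpow_intertwine[where f="linmap n A" and g="linmap n G" and h="linmap n A'"]) (rule linmap_intertwine[OF rel])
    thus ?thesis using v m by (simp add: linmap_zero_vec)
  qed
  thus ?thesis unfolding ad_nilpotent_def by blast
qed

lemma scale_step_nilpotent:
  assumes c: "c \<noteq> 0" and rel: "\<forall>p\<in>Pn n. \<forall>q\<in>Pn n. A' p q = c * A p q" and N: "ad_nilpotent n A'"
  shows "ad_nilpotent n A"
proof -
  have L: "linmap n A' = (\<lambda>v q. c * linmap n A v q)"
  proof -
    have "linmap n A' = linmap n (\<lambda>p q. c * A p q)" by (rule linmap_cong_mat) (use rel in auto)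
    thus ?thesis by (simp add: linmap_scale_mat fun_eq_iff)
  qed
  have pw: "(linmap n A' ^^ k) v = (\<lambda>q. c ^ k * (linmap n A ^^ k) v q)" for k v
  proof (induction k)
    case (Suc k)
    have "(linmap n A' ^^ Suc k) v = linmap n A' ((linmap n A' ^^ k) v)" by simp
    also have "\<dots> = (\<lambda>q. c * linmap n A ((linmap n A' ^^ k) v) q)" by (simp add: L)
    also have "\<dots> = (\<lambda>q. c * linmap n A (\<lambda>q. c ^ k * (linmap n A ^^ k) v q) q)" by (simp only: Suc.IH)
    also have "\<dots> = (\<lambda>q. c ^ Suc k * (linmap n A ^^ Suc k) v q)" by (simp add: linmap_scale_vec mult.assoc)
    finally show ?case .
  qed simp
  from N obtain m where m: "\<forall>v\<in>Tn n. (linmap n A' ^^ m) v = (\<lambda>_. 0)" unfolding ad_nilpotent_def by blast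
  have "(linmap n A ^^ m) v = (\<lambda>_. 0)" if "v \<in> Tn n" for v
    using m that c unfolding pw by (auto simp: fun_eq_iff)
  thus ?thesis unfolding ad_nilpotent_def by blast
qed

lemma adm_step_nilpotent: "adm_step n A A' \<Longrightarrow> is_derivation n A \<Longrightarrow> ad_nilpotent n A' \<Longrightarrow> ad_nilpotent n A"
  unfolding adm_step_def
proof (elim disjE bexE exE conjE)
  fix \<mu> assume "\<mu> \<in> Tn n" "\<forall>p\<in>Pn n. \<forall>q\<in>Pn n. A' p q = A p q + brk n \<mu> (Eu p) q" "is_derivation n A" "ad_nilpotent n A'"
  thus "ad_nilpotent n A" by (rule_tac shift_step_nilpotent)
next
  fix G assume "bij_betw (linmap n G) (Tn n) (Tn n)"
   "\<forall>p\<in>Pn n. \<forall>s\<in>Pn n. (\<Sum>r\<in>Pn n. G p r * A r s) = (\<Sum>r\<in>Pn n. A' p r * G r s)" "ad_nilpotent n A'"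
  thus "ad_nilpotent n A" by (rule_tac automorphism_step_nilpotent)
next
  fix c :: 'a assume "c \<noteq> 0" "\<forall>p\<in>Pn n. \<forall>q\<in>Pn n. A' p q = c * A p q" "ad_nilpotent n A'"
  thus "ad_nilpotent n A" by (rule_tac scale_step_nilpotent)
qed

lemma admissible_nilpotent: "admissible n A A' \<Longrightarrow> is_derivation n A \<Longrightarrow> ad_nilpotent n A' \<Longrightarrow> ad_nilpotent n A"
  unfolding admissible_def
proof (induction rule: rtranclp_induct)
  case (step y z)
  have "is_derivation n y" using step.hyps(1) step.prems(1) admissible_derivation unfolding admissible_def by blast
  thus ?case using step by (blast intro: adm_step_nilpotent)
qed simp

section \<open>Reduction by an inner derivation\<close>

text \<open>The element \<mu> of T(n) of transformation (i) that annihilates the entries listed in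
  the locale reduced_derivation.\<close>

definition reducing_shift :: "nat \<Rightarrow> (nat \<times> nat \<Rightarrow> nat \<times> nat \<Rightarrow> 'a::field) \<Rightarrow> nat \<times> nat \<Rightarrow> 'a" where
  "reducing_shift n B = (\<lambda>(a,b). if (a,b) \<in> Pn n then
     (if 2 \<le> a then B (a-1,a) (a-1,b) else if b < n then - B (b,b+1) (1,b+1) else 0) else 0)"

definition reduce :: "nat \<Rightarrow> (nat \<times> nat \<Rightarrow> nat \<times> nat \<Rightarrow> 'a::field) \<Rightarrow> nat \<times> nat \<Rightarrow> nat \<times> nat \<Rightarrow> 'a" where
  "reduce n B = (\<lambda>p q. B p q + brk n (reducing_shift n B) (Eu p) q)"

lemma reducing_shift_Tn: "reducing_shift n B \<in> Tn n"
  unfolding Tn_def reducing_shift_def by auto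

lemma reduce_step: "adm_step n B (reduce n B)"
  unfolding adm_step_def reduce_def using reducing_shift_Tn by blast

lemma reduce_reduced_derivation:
  fixes B :: "nat \<times> nat \<Rightarrow> nat \<times> nat \<Rightarrow> 'a::field_char_0"
  assumes "4 \<le> n" and D: "is_derivation n B"
  shows "reduced_derivation n (mat_entry n (reduce n B))"
proof
  show "4 \<le> n" by fact
  show "derivation_eqs n (mat_entry n (reduce n B))"
    by (rule derivation_eqs_mat_entry[OF adm_step_derivation[OF reduce_step D]])
next
  fix a b :: nat assume h: "2 \<le> a" "a < b" "b \<le> n"
  have P: "(a-1,a) \<in> Pn n" "(a-1,b) \<in> Pn n" using h by auto
  have "brk n (reducing_shift n B) (Eu (a-1,a)) (a-1,b) = - B (a-1,a) (a-1,b)"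
    using brk_unit_right[OF P(1), of "reducing_shift n B" "a-1" b] h by (simp add: reducing_shift_def)
  thus "mat_entry n (reduce n B) (a-1,a) (a-1,b) = 0" using P by (simp add: mat_entry_def reduce_def)
next
  fix b :: nat assume h: "1 < b" "b < n"
  have P: "(b,b+1) \<in> Pn n" "(1,b+1) \<in> Pn n" using h by auto
  have "brk n (reducing_shift n B) (Eu (b,b+1)) (1,b+1) = - B (b,b+1) (1,b+1)"
    using brk_unit_right[OF P(1), of "reducing_shift n B" 1 "b+1"] h by (simp add: reducing_shift_def)
  thus "mat_entry n (reduce n B) (b,b+1) (1,b+1) = 0" using P by (simp add: mat_entry_def reduce_def)
next
  fix s t :: "nat \<times> nat" assume "s \<notin> Pn n \<or> t \<notin> Pn n"
  thus "mat_entry n (reduce n B) s t = 0" by (auto simp: mat_entry_def)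
qed

lemma reduce_entries:
  fixes B :: "nat \<times> nat \<Rightarrow> nat \<times> nat \<Rightarrow> 'a::field_char_0"
  assumes n4: "4 \<le> n" and D: "is_derivation n B" and s: "s \<in> Pn n" and t: "t \<in> Pn n"
  shows "reduce n B s t = (if s = t then B s s else if is_target_entry n s t then B s t else 0)"
proof -
  interpret reduced_derivation n "mat_entry n (reduce n B)"
    by (rule reduce_reduced_derivation[OF n4 D])
  obtain i k where sik: "s = (i,k)" by (cases s)
  obtain x y where txy: "t = (x,y)" by (cases t)
  have unchanged: "brk n (reducing_shift n B) (Eu s) t = 0" if "t = s \<or> is_target_entry n s t"
  proof -
    have "reducing_shift n B (l,l) = 0" for l by (simp add: reducing_shift_def)
    thus ?thesis using that brk_unit_right[of i k n "reducing_shift n B" x y] s sik txy n4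
      by (auto simp: is_target_entry_def target_def split: if_splits)
  qed
  show ?thesis
    using unchanged non_target_entry_zero[of t s] s t by (auto simp: reduce_def mat_entry_def)
qed

section \<open>Removing a surviving entry by a shear\<close>

definition shear :: "nat \<Rightarrow> nat \<Rightarrow> 'a::field \<Rightarrow> nat \<times> nat \<Rightarrow> nat \<times> nat \<Rightarrow> 'a" where
  "shear n j a = (\<lambda>p q. (if p = q then 1 else 0) + (if p = (j,j+1) \<and> q = target n j then a else 0))"

lemma linmap_shear:
  assumes n4: "4 \<le> n" and j: "1 \<le> j" "j < n" and v: "v \<in> Tn n"
  shows "linmap n (shear n j a) v = (\<lambda>q. v q + (a * v (j,j+1)) * Eu (target n j) q)"
proof
  fix q
  have t0: "target n j \<in> Pn n" "(j,j+1) \<in> Pn n" using target_Pn[OF n4 j] j by auto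
  have "(\<Sum>p\<in>Pn n. v p * shear n j a p q) = (\<Sum>p\<in>Pn n. (if p = q then v p else 0)
      + (if p = (j,j+1) then (if q = target n j then a * v p else 0) else 0))"
    by (rule sum.cong) (auto simp: shear_def algebra_simps)
  also have "\<dots> = (if q \<in> Pn n then v q else 0) + (if q = target n j then a * v (j,j+1) else 0)"
    using t0 by (simp add: sum.distrib)
  finally show "linmap n (shear n j a) v q = v q + (a * v (j,j+1)) * Eu (target n j) q"
    using t0 Tn_outside[OF v, of q] unfolding linmap_def Eu_def by auto
qed

lemma brk_simple_root_zero: "brk n v w (j,j+1) = 0" if "v \<in> Tn n" "w \<in> Tn n"
proof -
  have "v (j,l) * w (l,j+1) - w (j,l) * v (l,j+1) = 0" for l
  proof (cases "j < l")
    case True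
    hence "w (l,j+1) = 0" "v (l,j+1) = 0" using that by (auto simp: Tn_def)
    thus ?thesis by simp
  next
    case False
    hence "w (j,l) = 0" "v (j,l) = 0" using that by (auto simp: Tn_def)
    thus ?thesis by simp
  qed
  thus ?thesis by (simp add: brk_def)
qed

text \<open>N_target is central except for [N_{12}, N_{2n}] = N_{1n} (j = 1) and
  [N_{1,n-1}, N_{n-1,n}] = N_{1n} (j = n - 1), and there the two terms cancel; this is why
  the shear is an automorphism.\<close>

lemma brk_target_cancel:
  assumes n4: "4 \<le> n" and j: "1 \<le> j" "j < n" and v: "v \<in> Tn n" and w: "w \<in> Tn n"
  shows "w (j,j+1) * brk n v (Eu (target n j)) q + v (j,j+1) * brk n (Eu (target n j)) w q = 0"
proof -
  obtain c d where cd: "target n j = (c,d)" by (cases "target n j")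
  obtain x y where q: "q = (x,y)" by (cases q)
  have cdP: "(c,d) \<in> Pn n" using target_Pn[OF n4 j] cd by simp
  have z: "v (l,1) = 0" "w (l,1) = 0" "v (n,l) = 0" "w (n,l) = 0" for l
    using v w by (auto simp: Tn_def)
  have L: "brk n v (Eu (target n j)) (x,y) = (if d = y then v (x,c) else 0) - (if x = c then v (d,y) else 0)"
    unfolding cd by (rule brk_unit_right[OF cdP])
  have R: "brk n (Eu (target n j)) w (x,y) = (if x = c then w (d,y) else 0) - (if y = d then w (x,c) else 0)"
    unfolding cd by (rule brk_unit_left[OF cdP])
  consider "j = 1" | "j = n - 1" | "j \<noteq> 1" "j \<noteq> n - 1" by blast
  thus ?thesis
  proof cases
    case 1
    hence "c = 2" "d = n" using cd by (simp_all add: target_def)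
    moreover have "v (x,2) = (if x = 1 then v (1,2) else 0)" "w (x,2) = (if x = 1 then w (1,2) else 0)"
      using v w by (auto simp: Tn_def)
    ultimately show ?thesis unfolding q L R using 1 z by (auto simp: algebra_simps numeral_2_eq_2)
  next
    case 2
    hence "c = 1" "d = n - 1" using cd n4 by (auto simp: target_def split: if_splits)
    moreover have "v (n-1,y) = (if y = n then v (n-1,n) else 0)" "w (n-1,y) = (if y = n then w (n-1,n) else 0)"
    proof -
      have "y \<noteq> n \<Longrightarrow> (n-1,y) \<notin> Pn n" by auto
      thus "v (n-1,y) = (if y = n then v (n-1,n) else 0)" "w (n-1,y) = (if y = n then w (n-1,n) else 0)"
        using Tn_outside[OF v] Tn_outside[OF w] by auto
    qed
    ultimately show ?thesis unfolding q L R using z 2 n4 by (auto simp: algebra_simps)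
  next
    case 3
    hence "c = 1" "d = n" using cd by (simp_all add: target_def)
    thus ?thesis unfolding q L R using z by auto
  qed
qed

lemma shear_hom:
  assumes n4: "4 \<le> n" and j: "1 \<le> j" "j < n" and v: "v \<in> Tn n" and w: "w \<in> Tn n"
  shows "linmap n (shear n j a) (brk n v w)
    = (\<lambda>q. if q \<in> Pn n then brk n (linmap n (shear n j a) v) (linmap n (shear n j a) w) q else 0)"
proof -
  let ?E = "Eu (target n j) :: nat \<times> nat \<Rightarrow> 'a"
  have vw: "brk n v w \<in> Tn n" using v w by (rule brk_Tn)
  have Ebrk: "brk n ?E ?E = (\<lambda>_. 0)"
  proof -
    obtain c d where "target n j = (c,d)" by (cases "target n j")
    thus ?thesis using target_Pn[OF n4 j] by (intro ext) (auto simp: brk_unit_unit)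
  qed
  have key: "a * w (j,j+1) * brk n v ?E q + a * v (j,j+1) * brk n ?E w q = 0" for q
    using brk_target_cancel[OF n4 j v w, of q] by (simp add: mult.assoc flip: distrib_left)
  have lhs: "linmap n (shear n j a) (brk n v w) = brk n v w"
    unfolding linmap_shear[OF n4 j vw] brk_simple_root_zero[OF v w] by simp
  have rhs: "brk n (linmap n (shear n j a) v) (linmap n (shear n j a) w) = brk n v w"
    unfolding linmap_shear[OF n4 j v] linmap_shear[OF n4 j w]
    by (simp only: brk_add_left brk_add_right brk_scale_left brk_scale_right Ebrk)
      (use key in \<open>simp add: algebra_simps fun_eq_iff\<close>)
  show ?thesis unfolding lhs rhs using vw by (auto simp: Tn_def fun_eq_iff)
qed

lemma shear_simple_root: assumes "4 \<le> n" "1 \<le> j" "j < n" "v \<in> Tn n"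
  shows "linmap n (shear n j a) v (j,j+1) = v (j,j+1)"
  using target_not_simple[OF assms(1-3), of j] by (simp add: linmap_shear[OF assms] Eu_def)

lemma shear_inverse:
  assumes n4: "4 \<le> n" and j: "1 \<le> j" "j < n" and v: "v \<in> Tn n"
  shows "linmap n (shear n j (-a)) (linmap n (shear n j a) v) = v"
proof -
  have "linmap n (shear n j (-a)) (linmap n (shear n j a) v)
      = (\<lambda>q. linmap n (shear n j a) v q + (- a * linmap n (shear n j a) v (j,j+1)) * Eu (target n j) q)"
    by (rule linmap_shear[OF n4 j linmap_Tn])
  also have "\<dots> = v"
    unfolding shear_simple_root[OF n4 j v] unfolding linmap_shear[OF n4 j v]
    by (simp add: fun_eq_iff algebra_simps)
  finally show ?thesis .
qed

lemma shear_bij: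
  assumes n4: "4 \<le> n" and j: "1 \<le> j" "j < n"
  shows "bij_betw (linmap n (shear n j a)) (Tn n) (Tn n)"
  by (rule bij_betw_byWitness[where f'="linmap n (shear n j (-a))"])
    (use shear_inverse[OF n4 j] shear_inverse[OF n4 j, of _ "-a"] in \<open>auto intro: linmap_Tn\<close>)

lemma shear_mult_left: assumes "p \<in> Pn n" "4 \<le> n" "1 \<le> j" "j < n"
  shows "(\<Sum>r\<in>Pn n. shear n j a p r * X r) = X p + (if p = (j,j+1) then a * X (target n j) else 0)"
proof -
  have "(\<Sum>r\<in>Pn n. shear n j a p r * X r) = (\<Sum>r\<in>Pn n. (if r = p then X r else 0) + (if r = target n j then (if p = (j,j+1) then a * X r else 0) else 0))"
    by (rule sum.cong) (auto simp: shear_def algebra_simps)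
  also have "\<dots> = X p + (if p = (j,j+1) then a * X (target n j) else 0)"
    using assms target_Pn[OF assms(2-4)] by (simp add: sum.distrib)
  finally show ?thesis .
qed

lemma shear_mult_right: assumes "s \<in> Pn n" "4 \<le> n" "1 \<le> j" "j < n"
  shows "(\<Sum>r\<in>Pn n. Y r * shear n j a r s) = Y s + (if s = target n j then Y (j,j+1) * a else 0)"
proof -
  have "(\<Sum>r\<in>Pn n. Y r * shear n j a r s) = (\<Sum>r\<in>Pn n. (if r = s then Y r else 0) + (if r = (j,j+1) then (if s = target n j then Y r * a else 0) else 0))"
    by (rule sum.cong) (auto simp: shear_def algebra_simps)
  also have "\<dots> = Y s + (if s = target n j then Y (j,j+1) * a else 0)"
    using assms by (simp add: sum.distrib)
  finally show ?thesis .
qed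

lemma shear_removes_target_entry:
  fixes B :: "nat \<times> nat \<Rightarrow> nat \<times> nat \<Rightarrow> 'a::field"
  assumes n4: "4 \<le> n" and j: "1 \<le> j" "j < n"
    and supp: "\<And>s t. s \<in> Pn n \<Longrightarrow> t \<in> Pn n \<Longrightarrow> s \<noteq> t \<Longrightarrow> \<not> is_target_entry n s t \<Longrightarrow> B s t = 0"
    and dne: "B (target n j) (target n j) \<noteq> B (j,j+1) (j,j+1)"
  shows "adm_step n B (\<lambda>s t. if s = (j,j+1) \<and> t = target n j then 0 else B s t)"
proof -
  let ?p = "(j,j+1)" and ?t = "target n j"
  define a where "a = B ?p ?t / (B ?p ?p - B ?t ?t)"
  define B' where "B' = (\<lambda>s t. if s = ?p \<and> t = ?t then 0 else B s t)"
  have tP: "?t \<in> Pn n" "?p \<in> Pn n" using target_Pn[OF n4 j] j by auto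
  have pt: "?p \<noteq> ?t" using target_not_simple[OF n4 j, of j] by auto
  have row_t: "B ?t s = (if s = ?t then B ?t ?t else 0)" if "s \<in> Pn n" for s
    using supp[OF tP(1) that] not_is_target_entry_from_target[OF n4 j] by auto
  have col_p: "B s ?p = (if s = ?p then B ?p ?p else 0)" if "s \<in> Pn n" for s
    using supp[OF that tP(2)] not_is_target_entry_simple[OF n4] by auto
  have rel: "(\<Sum>r\<in>Pn n. shear n j a p r * B r s) = (\<Sum>r\<in>Pn n. B' p r * shear n j a r s)"
    if p: "p \<in> Pn n" and s: "s \<in> Pn n" for p s
  proof -
    have "(\<Sum>r\<in>Pn n. shear n j a p r * B r s) = B p s + (if p = ?p then a * B ?t s else 0)"
      by (rule shear_mult_left[OF p n4 j])
    moreover have "(\<Sum>r\<in>Pn n. B' p r * shear n j a r s) = B' p s + (if s = ?t then B' p ?p * a else 0)"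
      by (rule shear_mult_right[OF s n4 j])
    moreover have "B' p ?p = B p ?p" using pt by (simp add: B'_def)
    moreover have "B ?p ?p - B ?t ?t \<noteq> 0" using dne by simp
    ultimately show ?thesis using row_t[OF s] col_p[OF p]
      by (auto simp: B'_def a_def field_simps)
  qed
  show ?thesis
    unfolding adm_step_def B'_def[symmetric] using shear_bij[OF n4 j, of a] shear_hom[OF n4 j] rel by blast
qed

section \<open>The diagonal\<close>

lemma derivation_diag_add:
  assumes D: "is_derivation n B" and h: "1 \<le> i" "i < k" "k < b" "b \<le> n"
  shows "B (i,b) (i,b) = B (i,k) (i,k) + B (k,b) (k,b)"
proof -
  have P: "(i,k) \<in> Pn n" "(k,b) \<in> Pn n" "(i,b) \<in> Pn n" using h by auto
  from derivation_eqsD[OF derivation_eqs_mat_entry[OF D] P] show ?thesis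
    using h P by (simp add: mat_entry_def)
qed

lemma derivation_diag_sum:
  assumes D: "is_derivation n B" and h: "1 \<le> i" "i < k" "k \<le> n"
  shows "B (i,k) (i,k) = (\<Sum>l\<in>{i..<k}. B (l,l+1) (l,l+1))"
  using h
proof (induction k)
  case 0 thus ?case by simp
next
  case (Suc k)
  show ?case
  proof (cases "i = k")
    case True thus ?thesis by simp
  next
    case False
    hence ik: "i < k" using Suc by simp
    have "B (i,Suc k) (i,Suc k) = B (i,k) (i,k) + B (k,Suc k) (k,Suc k)"
      using derivation_diag_add[OF D, of i k "Suc k"] ik Suc.prems by simp
    also have "B (i,k) (i,k) = (\<Sum>l\<in>{i..<k}. B (l,l+1) (l,l+1))" using Suc.IH ik Suc.prems by simp
    finally show ?thesis using ik by simp
  qed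
qed

text \<open>With x_l the diagonal entry of N_{l,l+1}, the diagonal entry of N_{ik} is x_i + ... + x_{k-1};
  the hypotheses say that each row N_{j,j+1} and its target column carry the same diagonal entry.\<close>

lemma balanced_weights_zero:
  fixes x :: "nat \<Rightarrow> 'a::field_char_0"
  assumes n4: "4 \<le> n"
    and first: "(\<Sum>l\<in>{2..<n}. x l) = x 1"
    and last: "(\<Sum>l\<in>{1..<n-1}. x l) = x (n-1)"
    and middle: "\<And>j. 2 \<le> j \<Longrightarrow> j + 2 \<le> n \<Longrightarrow> (\<Sum>l\<in>{1..<n}. x l) = x j"
    and l: "1 \<le> l" "l < n"
  shows "x l = 0"
proof -
  define T where "T = (\<Sum>l\<in>{1..<n}. x l)"
  have s1: "T = x 1 + (\<Sum>l\<in>{2..<n}. x l)"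
    unfolding T_def using n4 by (subst sum.atLeast_Suc_lessThan) (simp_all add: numeral_2_eq_2)
  have s2: "(\<Sum>l\<in>{2..<n}. x l) = (\<Sum>l\<in>{2..<n-1}. x l) + x (n-1)"
  proof -
    have "(\<Sum>l\<in>{2..<n}. x l) = (\<Sum>l\<in>{2..<Suc (n-1)}. x l)" using n4 by simp
    also have "\<dots> = (\<Sum>l\<in>{2..<n-1}. x l) + x (n-1)" using n4 by (subst sum.atLeastLessThan_Suc) auto
    finally show ?thesis .
  qed
  have s3: "(\<Sum>l\<in>{2..<n-1}. x l) = of_nat (n - 3) * T"
  proof -
    have "(\<Sum>l\<in>{2..<n-1}. x l) = (\<Sum>l\<in>{2..<n-1}. T)"
    proof (rule sum.cong)
      fix l assume "l \<in> {2..<n-1}"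
      thus "x l = T" using middle[of l] unfolding T_def by auto
    qed simp
    also have "\<dots> = of_nat (n-3) * T" by (simp add: numeral_3_eq_3)
    finally show ?thesis .
  qed
  have s4: "T = (\<Sum>l\<in>{1..<n-1}. x l) + x (n-1)"
  proof -
    have "(\<Sum>l\<in>{1..<n}. x l) = (\<Sum>l\<in>{1..<Suc (n-1)}. x l)" using n4 by simp
    also have "\<dots> = (\<Sum>l\<in>{1..<n-1}. x l) + x (n-1)" using n4 by (subst sum.atLeastLessThan_Suc) auto
    finally show ?thesis unfolding T_def .
  qed
  have x1: "2 * x 1 = T" using s1 first by simp
  have xn: "2 * x (n-1) = T" using s4 last by simp
  have "T = x 1 + of_nat (n-3) * T + x (n-1)" using s1 s2 s3 by simp
  hence "2 * T = 2 * (x 1 + of_nat (n-3) * T + x (n-1))" by (rule arg_cong)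
  also have "\<dots> = 2 * x 1 + 2 * of_nat (n-3) * T + 2 * x (n-1)" by (simp add: algebra_simps)
  finally have "(2 * of_nat (n-3)) * T = 0" unfolding x1 xn by (simp add: algebra_simps)
  moreover have "(of_nat (n-3) :: 'a) \<noteq> 0" using n4 by (simp del: of_nat_diff)
  ultimately have T0: "T = 0" by simp
  have "l = 1 \<or> l = n - 1 \<or> (2 \<le> l \<and> l + 2 \<le> n)" using l by arith
  thus ?thesis using x1 xn middle T0 unfolding T_def by auto
qed

lemma derivation_diag_zero:
  fixes B :: "nat \<times> nat \<Rightarrow> nat \<times> nat \<Rightarrow> 'a::field_char_0"
  assumes n4: "4 \<le> n" and D: "is_derivation n B"
    and eq: "\<And>j. 1 \<le> j \<Longrightarrow> j < n \<Longrightarrow> B (target n j) (target n j) = B (j,j+1) (j,j+1)"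
    and s: "s \<in> Pn n"
  shows "B s s = 0"
proof -
  define x where "x l = B (l,l+1) (l,l+1)" for l
  have ds: "B (i,k) (i,k) = (\<Sum>l\<in>{i..<k}. x l)" if "1 \<le> i" "i < k" "k \<le> n" for i k
    using derivation_diag_sum[OF D that] by (simp add: x_def)
  have "n - 1 \<noteq> 1" using n4 by arith
  hence "(\<Sum>l\<in>{2..<n}. x l) = x 1" "(\<Sum>l\<in>{1..<n-1}. x l) = x (n-1)"
    using eq[of 1] eq[of "n-1"] ds[of 2 n] ds[of 1 "n-1"] n4 by (simp_all add: target_def x_def)
  moreover have "(\<Sum>l\<in>{1..<n}. x l) = x j" if "2 \<le> j" "j + 2 \<le> n" for j
  proof -
    have "target n j = (1,n)" using that by (simp add: target_def)
    thus ?thesis using eq[of j] ds[of 1 n] that by (simp add: x_def)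
  qed
  ultimately have "x l = 0" if "1 \<le> l" "l < n" for l
    using balanced_weights_zero[OF n4] that by blast
  moreover obtain i k where "s = (i,k)" by (cases s)
  ultimately show ?thesis using ds s by (auto intro: sum.neutral)
qed

text \<open>Rows of target entries are simple roots, which never occur as targets; so the square vanishes.\<close>

lemma ad_nilpotent_if_target_supported:
  assumes n4: "4 \<le> n"
    and h: "\<And>p q. p \<in> Pn n \<Longrightarrow> q \<in> Pn n \<Longrightarrow> B1 p q \<noteq> 0 \<Longrightarrow> is_target_entry n p q"
  shows "ad_nilpotent n B1"
proof -
  have z1: "linmap n B1 u (l,l+1) = 0" for u l
  proof (cases "(l,l+1) \<in> Pn n")
    case True
    have "u p * B1 p (l,l+1) = 0" if "p \<in> Pn n" for p
      using h[OF that True] not_is_target_entry_simple[OF n4, of p l] by auto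
    hence "(\<Sum>p\<in>Pn n. u p * B1 p (l,l+1)) = 0" by (intro sum.neutral) blast
    thus ?thesis by (simp add: linmap_def)
  next
    case False thus ?thesis by (simp add: linmap_def del: Pn_iff)
  qed
  have z2: "linmap n B1 (linmap n B1 v) q = 0" for v q
  proof (cases "q \<in> Pn n")
    case qP: True
    have "linmap n B1 v p * B1 p q = 0" if "p \<in> Pn n" for p
    proof (cases "B1 p q = 0")
      case False
      hence "is_target_entry n p q" using h that qP by blast
      then obtain j where "p = (j,j+1)" using is_target_entry_def by blast
      thus ?thesis using z1 by simp
    qed simp
    hence "(\<Sum>p\<in>Pn n. linmap n B1 v p * B1 p q) = 0" by (intro sum.neutral) blast
    thus ?thesis by (simp add: linmap_def)
  next
    case False thus ?thesis by (simp add: linmap_def)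
  qed
  have "\<forall>v\<in>Tn n. (linmap n B1 ^^ 2) v = (\<lambda>_. 0)"
    using z2 by (simp add: numeral_2_eq_2 fun_eq_iff)
  thus ?thesis unfolding ad_nilpotent_def by blast
qed

section \<open>Canonical forms\<close>

definition target_support :: "nat \<Rightarrow> (nat \<times> nat \<Rightarrow> nat \<times> nat \<Rightarrow> 'a::field) \<Rightarrow> ((nat \<times> nat) \<times> (nat \<times> nat)) set" where
  "target_support n B = {(s,t). is_target_entry n s t \<and> B s t \<noteq> 0}"

lemma finite_offdiag_support: "finite (offdiag_support n B)"
proof -
  have "offdiag_support n B \<subseteq> Pn n \<times> Pn n" by (auto simp: offdiag_support_def)
  thus ?thesis by (rule finite_subset) simp
qed

lemma target_support_subset: "4 \<le> n \<Longrightarrow> target_support n B \<subseteq> offdiag_support n B"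
  using is_target_entry_Pn unfolding target_support_def offdiag_support_def by blast

lemma offdiag_support_reduce:
  fixes B :: "nat \<times> nat \<Rightarrow> nat \<times> nat \<Rightarrow> 'a::field_char_0"
  assumes n4: "4 \<le> n" and D: "is_derivation n B"
  shows "offdiag_support n (reduce n B) = target_support n B"
proof -
  have "(s,t) \<in> offdiag_support n (reduce n B) \<longleftrightarrow> (s,t) \<in> target_support n B" for s t
  proof
    assume "(s,t) \<in> offdiag_support n (reduce n B)"
    hence h: "s \<in> Pn n" "t \<in> Pn n" "s \<noteq> t" "reduce n B s t \<noteq> 0" by (auto simp: offdiag_support_def)
    thus "(s,t) \<in> target_support n B"
      using reduce_entries[OF n4 D h(1,2)] by (auto simp: target_support_def split: if_splits)
  next
    assume "(s,t) \<in> target_support n B"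
    hence h: "is_target_entry n s t" "B s t \<noteq> 0" by (auto simp: target_support_def)
    have "s \<in> Pn n" "t \<in> Pn n" "s \<noteq> t" using is_target_entry_Pn[OF n4 h(1)] by auto
    thus "(s,t) \<in> offdiag_support n (reduce n B)"
      using reduce_entries[OF n4 D, of s t] h by (auto simp: offdiag_support_def)
  qed
  thus ?thesis by auto
qed

lemma card_target_support:
  "card (target_support n B) = card {j\<in>{1..<n}. B (j,j+1) (target n j) \<noteq> 0}"
proof -
  have "target_support n B = (\<lambda>j. ((j,j+1), target n j)) ` {j\<in>{1..<n}. B (j,j+1) (target n j) \<noteq> 0}"
    unfolding target_support_def is_target_entry_def by auto
  thus ?thesis by (simp add: card_image inj_on_def)
qed

lemma admissible_step: "admissible n A B \<Longrightarrow> adm_step n B C \<Longrightarrow> admissible n A C"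
  unfolding admissible_def by (rule rtranclp.rtrancl_into_rtrancl)

lemma canonical_form_derivation:
  "is_derivation n A \<Longrightarrow> canonical_form n A B \<Longrightarrow> is_derivation n B"
  unfolding canonical_form_def using admissible_derivation by blast

lemma canonical_form_support:
  fixes A B :: "nat \<times> nat \<Rightarrow> nat \<times> nat \<Rightarrow> 'a::field_char_0"
  assumes n4: "4 \<le> n" and D: "is_derivation n A" and C: "canonical_form n A B"
  shows "offdiag_support n B = target_support n B"
proof -
  have "admissible n A B" using C by (simp add: canonical_form_def)
  hence "admissible n A (reduce n B)" using reduce_step admissible_step by blast
  hence "card (offdiag_support n B) \<le> card (target_support n B)"
    using C offdiag_support_reduce[OF n4 canonical_form_derivation[OF D C]]
    by (auto simp: canonical_form_def offdiag_count_def)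
  thus ?thesis using card_seteq[OF finite_offdiag_support target_support_subset[OF n4]] by blast
qed

text \<open>If the diagonal entries differed, a shear of the reduced matrix would remove the entry and
  lower the count.\<close>

lemma canonical_form_diag_balanced:
  fixes A B :: "nat \<times> nat \<Rightarrow> nat \<times> nat \<Rightarrow> 'a::field_char_0"
  assumes n4: "4 \<le> n" and D: "is_derivation n A" and C: "canonical_form n A B"
    and j: "1 \<le> j" "j < n" and nz: "B (j,j+1) (target n j) \<noteq> 0"
  shows "B (target n j) (target n j) = B (j,j+1) (j,j+1)"
proof (rule ccontr)
  assume dne: "B (target n j) (target n j) \<noteq> B (j,j+1) (j,j+1)"
  let ?B1 = "reduce n B" and ?e = "((j,j+1), target n j)"
  define B2 where "B2 = (\<lambda>s t. if s = (j,j+1) \<and> t = target n j then 0 else ?B1 s t)"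
  have DB: "is_derivation n B" by (rule canonical_form_derivation[OF D C])
  have tP: "target n j \<in> Pn n" "(j,j+1) \<in> Pn n" using target_Pn[OF n4 j] j by auto
  have "adm_step n ?B1 B2" unfolding B2_def
  proof (rule shear_removes_target_entry[OF n4 j])
    show "?B1 s t = 0" if "s \<in> Pn n" "t \<in> Pn n" "s \<noteq> t" "\<not> is_target_entry n s t" for s t
      using reduce_entries[OF n4 DB that(1,2)] that by simp
    show "?B1 (target n j) (target n j) \<noteq> ?B1 (j,j+1) (j,j+1)"
      using reduce_entries[OF n4 DB] tP dne by simp
  qed
  moreover have "admissible n A B" using C by (simp add: canonical_form_def)
  ultimately have "admissible n A B2" using reduce_step admissible_step by blast
  hence le: "offdiag_count n B \<le> offdiag_count n B2" using C by (simp add: canonical_form_def)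
  have supp1: "offdiag_support n ?B1 = offdiag_support n B"
    using offdiag_support_reduce[OF n4 DB] canonical_form_support[OF n4 D C] by simp
  have "offdiag_support n B2 = offdiag_support n ?B1 - {?e}"
    unfolding B2_def offdiag_support_def by auto
  moreover have "?e \<in> offdiag_support n B"
    using canonical_form_support[OF n4 D C] nz j by (auto simp: target_support_def is_target_entry_def)
  ultimately have "offdiag_count n B2 < offdiag_count n B"
    unfolding offdiag_count_def supp1 using card_Diff1_less[OF finite_offdiag_support] by metis
  thus False using le by simp
qed

text \<open>If all n - 1 target entries were nonzero, the whole diagonal would vanish and the reduced
  matrix, hence ad X, would be nilpotent.\<close>

lemma canonical_form_target_entry_zero:
  fixes A B :: "nat \<times> nat \<Rightarrow> nat \<times> nat \<Rightarrow> 'a::field_char_0"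
  assumes n4: "4 \<le> n" and V: "valid_structure n A" and C: "canonical_form n A B"
  shows "\<exists>j. 1 \<le> j \<and> j < n \<and> B (j,j+1) (target n j) = 0"
proof (rule ccontr)
  assume "\<not> ?thesis"
  hence nz: "\<And>j. 1 \<le> j \<Longrightarrow> j < n \<Longrightarrow> B (j,j+1) (target n j) \<noteq> 0" by blast
  have D: "is_derivation n A" and NA: "\<not> ad_nilpotent n A"
    using V unfolding valid_structure_def nonnilpotent_def ad_nilpotent_def by auto
  have DB: "is_derivation n B" by (rule canonical_form_derivation[OF D C])
  have diag: "B s s = 0" if "s \<in> Pn n" for s
    using derivation_diag_zero[OF n4 DB canonical_form_diag_balanced[OF n4 D C _ _ nz] that] by blast
  have "is_target_entry n p q" if "p \<in> Pn n" "q \<in> Pn n" "reduce n B p q \<noteq> 0" for p q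
    using that reduce_entries[OF n4 DB that(1,2)] diag[OF that(1)] by (auto split: if_splits)
  hence "ad_nilpotent n (reduce n B)" by (rule ad_nilpotent_if_target_supported[OF n4])
  moreover have "admissible n A B" using C by (simp add: canonical_form_def)
  hence "admissible n A (reduce n B)" using reduce_step admissible_step by blast
  ultimately show False using admissible_nilpotent[OF _ D] NA by blast
qed

lemma canonical_form_offdiag_count:
  fixes A B :: "nat \<times> nat \<Rightarrow> nat \<times> nat \<Rightarrow> 'a::field_char_0"
  assumes n4: "4 \<le> n" and V: "valid_structure n A" and C: "canonical_form n A B"
  shows "offdiag_count n B \<le> n - 2"
proof -
  obtain j where j: "1 \<le> j" "j < n" "B (j,j+1) (target n j) = 0"
    using canonical_form_target_entry_zero[OF n4 V C] by blast
  have D: "is_derivation n A" using V by (simp add: valid_structure_def)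
  have "{l\<in>{1..<n}. B (l,l+1) (target n l) \<noteq> 0} \<subseteq> {1..<n} - {j}" using j by auto
  hence "card {l\<in>{1..<n}. B (l,l+1) (target n l) \<noteq> 0} \<le> card ({1..<n} - {j})"
    by (rule card_mono[rotated]) simp
  also have "\<dots> = n - 2" using j by (simp add: card_Diff_singleton)
  finally have "card {l\<in>{1..<n}. B (l,l+1) (target n l) \<noteq> 0} \<le> n - 2" .
  thus ?thesis unfolding offdiag_count_def canonical_form_support[OF n4 D C] card_target_support .
qed

section \<open>Normalisation\<close>

text \<open>The weight of N_{ik} under the diagonal automorphism N_{ik} \<mapsto> r_i \<cdots> r_{k-1} N_{ik}.\<close>

definition torus_weight :: "(nat \<Rightarrow> 'a::field) \<Rightarrow> nat \<times> nat \<Rightarrow> 'a" where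
  "torus_weight r p = (\<Prod>l\<in>{fst p..<snd p}. r l)"

lemma torus_weight_nonzero: "(\<forall>l. r l \<noteq> 0) \<Longrightarrow> torus_weight r p \<noteq> 0"
  by (simp add: torus_weight_def)

lemma torus_weight_split: "i \<le> l \<Longrightarrow> l \<le> k \<Longrightarrow> torus_weight r (i,k) = torus_weight r (i,l) * torus_weight r (l,k)"
  by (simp add: torus_weight_def prod.atLeastLessThan_concat)

lemma linmap_diag: "linmap n (\<lambda>p q. if p = q then f p else 0) v = (\<lambda>q. if q \<in> Pn n then v q * f q else 0)"
proof
  fix q
  have "(\<Sum>p\<in>Pn n. v p * (if p = q then f p else 0)) = (\<Sum>p\<in>Pn n. if p = q then v p * f p else 0)"
    by (rule sum.cong) auto
  thus "linmap n (\<lambda>p q. if p = q then f p else 0) v q = (if q \<in> Pn n then v q * f q else 0)"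
    by (simp add: linmap_def)
qed

lemma brk_torus:
  assumes v: "v \<in> Tn n" and w: "w \<in> Tn n"
  shows "brk n (\<lambda>q. if q \<in> Pn n then v q * torus_weight r q else 0) (\<lambda>q. if q \<in> Pn n then w q * torus_weight r q else 0) (x,y)
        = torus_weight r (x,y) * brk n v w (x,y)"
proof -
  let ?V = "\<lambda>q. if q \<in> Pn n then v q * torus_weight r q else 0" and ?W = "\<lambda>q. if q \<in> Pn n then w q * torus_weight r q else 0"
  have V: "?V q = v q * torus_weight r q" for q using Tn_outside[OF v, of q] by auto
  have W: "?W q = w q * torus_weight r q" for q using Tn_outside[OF w, of q] by auto
  have tm: "?V (x,l) * ?W (l,y) - ?W (x,l) * ?V (l,y) = torus_weight r (x,y) * (v (x,l) * w (l,y) - w (x,l) * v (l,y))" for l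
  proof (cases "(x,l) \<in> Pn n \<and> (l,y) \<in> Pn n")
    case True
    hence "torus_weight r (x,y) = torus_weight r (x,l) * torus_weight r (l,y)" by (intro torus_weight_split) auto
    thus ?thesis unfolding V W by (simp add: algebra_simps)
  next
    case False
    hence "v (x,l) * w (l,y) = 0" "w (x,l) * v (l,y) = 0" using Tn_outside[OF v] Tn_outside[OF w] by auto
    thus ?thesis unfolding V W by (auto simp: algebra_simps)
  qed
  show ?thesis unfolding brk_def case_prod_conv tm by (simp add: sum_distrib_left)
qed

lemma torus_step:
  assumes r: "\<forall>l. r l \<noteq> 0"
  shows "adm_step n B (\<lambda>p q. torus_weight r p * B p q / torus_weight r q)"
proof -
  let ?G = "\<lambda>p q. if p = q then torus_weight r p else 0"
  let ?Gi = "\<lambda>p q. if p = q then inverse (torus_weight r p) else 0"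
  have bij: "bij_betw (linmap n ?G) (Tn n) (Tn n)"
  proof (rule bij_betw_byWitness[where f'="linmap n ?Gi"])
    show "\<forall>v\<in>Tn n. linmap n ?Gi (linmap n ?G v) = v"
    proof (intro ballI ext)
      fix v :: "nat \<times> nat \<Rightarrow> 'a" and q assume v: "v \<in> Tn n"
      show "linmap n ?Gi (linmap n ?G v) q = v q"
        using torus_weight_nonzero[OF r, of q] Tn_outside[OF v, of q] unfolding linmap_diag by auto
    qed
    show "\<forall>v\<in>Tn n. linmap n ?G (linmap n ?Gi v) = v"
    proof (intro ballI ext)
      fix v :: "nat \<times> nat \<Rightarrow> 'a" and q assume v: "v \<in> Tn n"
      show "linmap n ?G (linmap n ?Gi v) q = v q"
        using torus_weight_nonzero[OF r, of q] Tn_outside[OF v, of q] unfolding linmap_diag by auto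
    qed
  qed (auto intro: linmap_Tn)
  have hom: "\<forall>v\<in>Tn n. \<forall>w\<in>Tn n. linmap n ?G (brk n v w) = (\<lambda>q. if q \<in> Pn n then brk n (linmap n ?G v) (linmap n ?G w) q else 0)"
  proof (intro ballI ext)
    fix v w :: "nat \<times> nat \<Rightarrow> 'a" and q :: "nat \<times> nat" assume v: "v \<in> Tn n" and w: "w \<in> Tn n"
    obtain x y where q: "q = (x,y)" by (cases q)
    show "linmap n ?G (brk n v w) q = (if q \<in> Pn n then brk n (linmap n ?G v) (linmap n ?G w) q else 0)"
      unfolding linmap_diag q brk_torus[OF v w] by (simp add: mult.commute)
  qed
  have rel: "\<forall>p\<in>Pn n. \<forall>s\<in>Pn n. (\<Sum>q\<in>Pn n. ?G p q * B q s) = (\<Sum>q\<in>Pn n. torus_weight r p * B p q / torus_weight r q * ?G q s)"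
  proof (intro ballI)
    fix p s assume p: "p \<in> Pn n" and s: "s \<in> Pn n"
    have "(\<Sum>q\<in>Pn n. ?G p q * B q s) = (\<Sum>q\<in>Pn n. if q = p then torus_weight r p * B p s else 0)"
      by (rule sum.cong) auto
    also have "\<dots> = torus_weight r p * B p s" using p by simp
    also have "\<dots> = (\<Sum>q\<in>Pn n. if q = s then torus_weight r p * B p s / torus_weight r s * torus_weight r s else 0)"
      using s torus_weight_nonzero[OF r, of s] by simp
    also have "\<dots> = (\<Sum>q\<in>Pn n. torus_weight r p * B p q / torus_weight r q * ?G q s)"
      by (rule sum.cong) auto
    finally show "(\<Sum>q\<in>Pn n. ?G p q * B q s) = (\<Sum>q\<in>Pn n. torus_weight r p * B p q / torus_weight r q * ?G q s)" .
  qed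
  show ?thesis unfolding adm_step_def using bij hom rel by blast
qed

lemma scale_step: "c \<noteq> 0 \<Longrightarrow> adm_step n B (\<lambda>p q. c * B p q)"
  unfolding adm_step_def by blast

lemma torus_weight_simple: "torus_weight r (j, Suc j) = r j" by (simp add: torus_weight_def)

definition rescale :: "nat \<Rightarrow> (nat \<Rightarrow> 'a::field) \<Rightarrow> (nat \<times> nat \<Rightarrow> nat \<times> nat \<Rightarrow> 'a) \<Rightarrow> nat \<times> nat \<Rightarrow> nat \<times> nat \<Rightarrow> 'a" where
  "rescale n r B = (\<lambda>p q. torus_weight r (1,n) * (torus_weight r p * B p q / torus_weight r q))"

lemma admissible_rescale:
  assumes r: "\<forall>l. r l \<noteq> 0"
  shows "admissible n B (rescale n r B)"
proof -
  have "admissible n B (\<lambda>p q. torus_weight r p * B p q / torus_weight r q)"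
    unfolding admissible_def by (rule r_into_rtranclp) (rule torus_step[OF r])
  moreover have "adm_step n (\<lambda>p q. torus_weight r p * B p q / torus_weight r q) (rescale n r B)"
    unfolding rescale_def by (rule scale_step) (rule torus_weight_nonzero[OF r])
  ultimately show ?thesis by (rule admissible_step)
qed

lemma offdiag_support_rescale: "\<forall>l. r l \<noteq> 0 \<Longrightarrow> offdiag_support n (rescale n r B) = offdiag_support n B"
  by (auto simp: offdiag_support_def rescale_def torus_weight_nonzero)

lemma rescale_target_entry:
  assumes n4: "4 \<le> n" and j: "1 \<le> j" "j < n" and r: "\<forall>l. r l \<noteq> 0"
  shows "rescale n r B (j,j+1) (target n j)
    = (if j = 1 \<or> j = n - 1 then r j * r j else r j) * B (j,j+1) (target n j)"
proof -
  have val: "rescale n r B (j,j+1) (target n j)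
      = torus_weight r (1,n) * r j * B (j,j+1) (target n j) / torus_weight r (target n j)"
    by (simp add: rescale_def torus_weight_simple)
  have tt: "torus_weight r (target n j) \<noteq> 0" by (rule torus_weight_nonzero[OF r])
  consider "j = 1" | "j \<noteq> 1" "j = n - 1" | "j \<noteq> 1" "j \<noteq> n - 1" by blast
  thus ?thesis
  proof cases
    case 1
    hence "target n j = (2,n)" by (simp add: target_def)
    moreover have "torus_weight r (1,n) = r 1 * torus_weight r (2,n)"
      using torus_weight_split[of 1 2 n r] torus_weight_simple[of r 1] n4 by (simp add: numeral_2_eq_2)
    ultimately show ?thesis using val 1 tt by (simp add: field_simps)
  next
    case 2
    hence "target n j = (1,n-1)" by (simp add: target_def)
    moreover have "torus_weight r (1,n) = torus_weight r (1,n-1) * r (n-1)"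
      using torus_weight_split[of 1 "n-1" n r] torus_weight_simple[of r "n-1"] n4 by simp
    ultimately show ?thesis using val 2 tt by (simp add: field_simps)
  next
    case 3
    hence "target n j = (1,n)" by (simp add: target_def)
    thus ?thesis using val 3 tt by (simp add: field_simps)
  qed
qed

text \<open>The linear entries are normalised by r_j = 1/b and the quadratic ones by a square root;
  the hypothesis on S is all that is needed about the field.\<close>

lemma canonical_form_normalizable:
  fixes A B :: "nat \<times> nat \<Rightarrow> nat \<times> nat \<Rightarrow> 'a::field_char_0"
  assumes n4: "4 \<le> n" and D: "is_derivation n A" and C: "canonical_form n A B"
    and one: "1 \<in> S" and square: "\<And>b. b \<noteq> 0 \<Longrightarrow> \<exists>c. c \<noteq> 0 \<and> c * c * b \<in> S"
  shows "normalizable_to n S B"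
proof -
  define b where "b l = B (l,l+1) (target n l)" for l
  define r where "r l = (if b l = 0 then 1 else if l = 1 \<or> l = n - 1
      then (SOME c. c \<noteq> 0 \<and> c * c * b l \<in> S) else inverse (b l))" for l
  have r0: "\<forall>l. r l \<noteq> 0"
  proof
    fix l show "r l \<noteq> 0"
      using someI_ex[OF square[of "b l"]] by (auto simp: r_def)
  qed
  have vals: "rescale n r B s t \<in> S" if st: "(s,t) \<in> offdiag_support n B" for s t
  proof -
    obtain j where j: "1 \<le> j" "j < n" "s = (j,j+1)" "t = target n j" "b j \<noteq> 0"
      using st canonical_form_support[OF n4 D C]
      by (auto simp: target_support_def is_target_entry_def b_def)
    have "(if j = 1 \<or> j = n - 1 then r j * r j else r j) * b j \<in> S"
    proof (cases "j = 1 \<or> j = n - 1")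
      case True
      hence "r j = (SOME c. c \<noteq> 0 \<and> c * c * b j \<in> S)" using j(5) by (simp add: r_def)
      thus ?thesis using someI_ex[OF square[OF j(5)]] True by simp
    next
      case False
      thus ?thesis using j(5) one by (simp add: r_def)
    qed
    thus ?thesis using rescale_target_entry[OF n4 j(1,2) r0, of B] j(3,4) by (simp add: b_def)
  qed
  show ?thesis unfolding normalizable_to_def
  proof (intro exI conjI)
    show "admissible n B (rescale n r B)" by (rule admissible_rescale[OF r0])
    show "offdiag_support n (rescale n r B) = offdiag_support n B" by (rule offdiag_support_rescale[OF r0])
    show "\<forall>(s,t)\<in>offdiag_support n (rescale n r B). rescale n r B s t \<in> S"
      using vals unfolding offdiag_support_rescale[OF r0] by blast
  qed
qed

lemma complex_square_multiple_one:
  assumes "(b::complex) \<noteq> 0"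
  shows "\<exists>c. c \<noteq> 0 \<and> c * c * b \<in> {1}"
proof (intro exI conjI)
  show "inverse (csqrt b) \<noteq> 0" using assms by simp
  have "inverse (csqrt b) * inverse (csqrt b) * b = b / (csqrt b)\<^sup>2"
    by (simp add: power2_eq_square divide_inverse mult.commute)
  thus "inverse (csqrt b) * inverse (csqrt b) * b \<in> {1}" using assms by simp
qed

lemma real_square_multiple_sign: "(b::real) \<noteq> 0 \<Longrightarrow> \<exists>c. c \<noteq> 0 \<and> c * c * b \<in> {1, -1}"
proof (rule exI[of _ "inverse (sqrt \<bar>b\<bar>)"])
  assume "b \<noteq> 0"
  thus "inverse (sqrt \<bar>b\<bar>) \<noteq> 0 \<and> inverse (sqrt \<bar>b\<bar>) * inverse (sqrt \<bar>b\<bar>) * b \<in> {1, -1}"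
    by (cases "b > 0") (auto simp: field_simps)
qed

theorem lemma5:
  fixes n :: nat
  assumes "n \<ge> 4"
  shows "(\<forall>A :: nat \<times> nat \<Rightarrow> nat \<times> nat \<Rightarrow> complex. valid_structure n A \<longrightarrow>
            (\<forall>A'. canonical_form n A A' \<longrightarrow>
               offdiag_count n A' \<le> n - 2 \<and> normalizable_to n {1} A'))
       \<and> (\<forall>A :: nat \<times> nat \<Rightarrow> nat \<times> nat \<Rightarrow> real. valid_structure n A \<longrightarrow>
            (\<forall>A'. canonical_form n A A' \<longrightarrow>
               offdiag_count n A' \<le> n - 2 \<and> normalizable_to n {1, -1} A'))"
proof (intro conjI allI impI)
  fix A A' :: "nat \<times> nat \<Rightarrow> nat \<times> nat \<Rightarrow> complex"
  assume V: "valid_structure n A" and C: "canonical_form n A A'"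
  have D: "is_derivation n A" using V by (simp add: valid_structure_def)
  show "offdiag_count n A' \<le> n - 2" by (rule canonical_form_offdiag_count[OF assms V C])
  show "normalizable_to n {1} A'"
    by (rule canonical_form_normalizable[OF assms D C _ complex_square_multiple_one]) simp
next
  fix A A' :: "nat \<times> nat \<Rightarrow> nat \<times> nat \<Rightarrow> real"
  assume V: "valid_structure n A" and C: "canonical_form n A A'"
  have D: "is_derivation n A" using V by (simp add: valid_structure_def)
  show "offdiag_count n A' \<le> n - 2" by (rule canonical_form_offdiag_count[OF assms V C])
  show "normalizable_to n {1, -1} A'"
    by (rule canonical_form_normalizable[OF assms D C _ real_square_multiple_sign]) simp
qed

end
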